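(* For every $2$-tag system $T=(V,\phi)$ with halting symbol $H$ there exists an ANEPFC $\Gamma$ whose underlying graph is the complete graph on $10$ nodes (so $\Gamma$ has size $10$), with input alphabet $V\setminus\{H\}$, such that the language accepted by $\Gamma$ is $$L_a(\Gamma)=\{w\in (V\setminus\{H\})^*\mid T \text{ halts on } w\}.$$
   Context: A $2$-tag system $T=(V,\phi)$ consists of a finite alphabet $V$ containing a special halting symbol $H$, and a map $\phi:V\setminus\{H\}\to V^+$ such that for each $x$ either $|\phi(x)|\ge 2$ or $\phi(x)=H$, and $\phi(x)=H$ for exactly one $x\in V\setminus\{H\}$. A halting word is a word containing $H$ or of length less than $2$. On non-halting words the tag operation $t_T$ is defined by: if $x$ is the leftmost symbol of $w$, then $t_T(w)$ is obtained by deleting the leftmost two symbols of $w$ and appending $\phi(x)$ at the right end. $T$ halts on $w$ if iterating $t_T$ starting from $w$ produces a halting word after finitely many steps. Evolutionary rules over an alphabet $U$: a substitution rule $a\to b$ ($a,b\in U$, $a\ne b$), a deletion rule $a\to\varepsilon$, an insertion rule $\varepsilon\to a$. For a rule $\sigma$ and a word $w$, with action mode $\alpha\in\{*,l,r\}$: a substitution $a\to b$ yields $\{ubv: w=uav\}$ (or $\{w\}$ if $a$ does not occur), for every mode; a deletion $a\to\varepsilon$ yields in mode $*$ the set $\{uv:w=uav\}$, in mode $r$ the set $\{u: w=ua\}$, in mode $l$ the set $\{v:w=av\}$ (each being $\{w\}$ if empty); an insertion $\varepsilon\to a$ yields in mode $*$ $\{uav: w=uv\}$, in mode $r$ $\{wa\}$,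 in mode $l$ $\{aw\}$. For a set of rules $M$ and language $L$, $M^\alpha(L)=\bigcup_{w\in L}\bigcup_{\sigma\in M}\sigma^\alpha(w)$. Filters: for disjoint $P,F\subseteq U$ and a word $x$, $\varphi^s(x;P,F)$ holds iff $P\subseteq alph(x)$ and $F\cap alph(x)=\emptyset$; $\varphi^w(x;P,F)$ holds iff $alph(x)\cap P\ne\emptyset$ and $F\cap alph(x)=\emptyset$, where $alph(x)$ is the set of symbols occurring in $x$. For a language $L$, $\varphi^\beta(L,P,F)=\{x\in L\mid\varphi^\beta(x;P,F)\}$. An accepting network of evolutionary processors with filtered connections (ANEPFC) is $\Gamma=(V,U,G,\mathcal R,\mathcal N,\alpha,\beta,x_I,x_O)$ where $V\subseteq U$ are the input and network alphabets; $G=(X_G,E_G)$ is an undirected loopless graph; $\mathcal R$ assigns to each node a set of rules all of one type (all substitutions, all deletions, or all insertions) over $U$; $\mathcal N$ assigns to each edge $e$ a pair $(P_e,F_e)$ of disjoint subsets of $U$; $\alpha:X_G\to\{*,l,r\}$; $\beta:E_G\to\{s,w\}$; $x_I,x_O\in X_G$ are the input and output nodes. The size of $\Gamma$ is $|X_G|$. A configuration maps each node to a set of words; the initial configuration on input $w\in V^*$ puts $\{w\}$ at $x_I$ and $\emptyset$ elsewhere. In an evolutionary step, $C'(x)=(\mathcal R(x))^{\alpha(x)}(C(x))$ for every node $x$. In a communication step, each node sends (and keeps no copy of) every word it holds that passes the filter $\varphi^{\beta(e)}(\cdot,P_e,F_e)$ of an incident edge $e$ to the neighbour across that edge, and receives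 all words from neighbours passing the corresponding edge filters; i.e. $C'(x)=\big(C(x)\setminus\bigcup_{\{x,y\}\in E_G}\varphi^{\beta(\{x,y\})}(C(x),\mathcal N(\{x,y\}))\big)\cup\bigcup_{\{x,y\}\in E_G}\varphi^{\beta(\{x,y\})}(C(y),\mathcal N(\{x,y\}))$. A computation on $z$ alternates evolutionary and communication steps starting with an evolutionary step from the initial configuration. It halts if some configuration has a nonempty set of words at $x_O$ (an accepting computation), or if two identical configurations are obtained in consecutive evolutionary steps or in consecutive communication steps. $L_a(\Gamma)$ is the set of $z\in V^*$ whose computation is accepting. *)

theory Defs
  imports Main
begin

definition tag_system :: "'a set \<Rightarrow> 'a \<Rightarrow> ('a \<Rightarrow> 'a list) \<Rightarrow> bool" where
  "tag_system V H phi \<longleftrightarrow> finite V \<and> H \<in> V \<and>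
     (\<forall>x \<in> V - {H}. phi x \<noteq> [] \<and> set (phi x) \<subseteq> V \<and>
        (2 \<le> length (phi x) \<or> phi x = [H])) \<and>
     (\<exists>!x. x \<in> V - {H} \<and> phi x = [H])"

definition halting_word :: "'a \<Rightarrow> 'a list \<Rightarrow> bool" where
  "halting_word H w \<longleftrightarrow> H \<in> set w \<or> length w < 2"

text \<open>The tag operation (only meaningful on non-halting words).\<close>
definition tag_step :: "('a \<Rightarrow> 'a list) \<Rightarrow> 'a list \<Rightarrow> 'a list" where
  "tag_step phi w = drop 2 w @ phi (hd w)"

definition tag_halts :: "'a \<Rightarrow> ('a \<Rightarrow> 'a list) \<Rightarrow> 'a list \<Rightarrow> bool" where
  "tag_halts H phi w \<longleftrightarrow> (\<exists>n. halting_word H ((tag_step phi ^^ n) w))"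

datatype 'b rule = Subst 'b 'b | Del 'b | Ins 'b

datatype amode = AStar | ALeft | ARight

datatype fmode = FStrong | FWeak

fun rule_app :: "'b rule \<Rightarrow> amode \<Rightarrow> 'b list \<Rightarrow> 'b list set" where
  "rule_app (Subst a b) m w =
     (if a \<in> set w then {u @ [b] @ v | u v. w = u @ [a] @ v} else {w})"
| "rule_app (Del a) AStar w =
     (if a \<in> set w then {u @ v | u v. w = u @ [a] @ v} else {w})"
| "rule_app (Del a) ARight w =
     (if (\<exists>u. w = u @ [a]) then {u. w = u @ [a]} else {w})"
| "rule_app (Del a) ALeft w =
     (if (\<exists>v. w = a # v) then {v. w = a # v} else {w})"
| "rule_app (Ins a) AStar w = {u @ [a] @ v | u v. w = u @ v}"
| "rule_app (Ins a) ARight w = {w @ [a]}"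
| "rule_app (Ins a) ALeft w = {a # w}"

definition apply_rules :: "'b rule set \<Rightarrow> amode \<Rightarrow> 'b list set \<Rightarrow> 'b list set" where
  "apply_rules M m L = (\<Union>w \<in> L. \<Union>\<sigma> \<in> M. rule_app \<sigma> m w)"

fun rule_syms :: "'b rule \<Rightarrow> 'b set" where
  "rule_syms (Subst a b) = {a, b}"
| "rule_syms (Del a) = {a}"
| "rule_syms (Ins a) = {a}"

fun rule_ok :: "'b rule \<Rightarrow> bool" where
  "rule_ok (Subst a b) = (a \<noteq> b)"
| "rule_ok _ = True"

fun is_subst :: "'b rule \<Rightarrow> bool" where
  "is_subst (Subst _ _) = True" | "is_subst _ = False"
fun is_del :: "'b rule \<Rightarrow> bool" where
  "is_del (Del _) = True" | "is_del _ = False"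
fun is_ins :: "'b rule \<Rightarrow> bool" where
  "is_ins (Ins _) = True" | "is_ins _ = False"

fun filt_word :: "fmode \<Rightarrow> 'b list \<Rightarrow> 'b set \<times> 'b set \<Rightarrow> bool" where
  "filt_word FStrong x (P, F) \<longleftrightarrow> P \<subseteq> set x \<and> F \<inter> set x = {}"
| "filt_word FWeak x (P, F) \<longleftrightarrow> set x \<inter> P \<noteq> {} \<and> F \<inter> set x = {}"

definition filt :: "fmode \<Rightarrow> 'b list set \<Rightarrow> 'b set \<times> 'b set \<Rightarrow> 'b list set" where
  "filt \<beta> L PF = {x \<in> L. filt_word \<beta> x PF}"

record 'b anepfc =
  net_alph :: "'b set"
  in_alph :: "'b set"
  nodes :: "nat set"
  edges :: "nat set set"
  rules :: "nat \<Rightarrow> 'b rule set"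
  efilter :: "nat set \<Rightarrow> 'b set \<times> 'b set"
  nmode :: "nat \<Rightarrow> amode"
  emode :: "nat set \<Rightarrow> fmode"
  xin :: nat
  xout :: nat

definition wf_anepfc :: "'b anepfc \<Rightarrow> bool" where
  "wf_anepfc N \<longleftrightarrow>
     finite (net_alph N) \<and> in_alph N \<subseteq> net_alph N \<and>
     finite (nodes N) \<and>
     edges N \<subseteq> {{x, y} | x y. x \<in> nodes N \<and> y \<in> nodes N \<and> x \<noteq> y} \<and>
     xin N \<in> nodes N \<and> xout N \<in> nodes N \<and>
     (\<forall>x \<in> nodes N.
        (\<forall>r \<in> rules N x. rule_ok r \<and> rule_syms r \<subseteq> net_alph N) \<and>
        ((\<forall>r \<in> rules N x. is_subst r) \<or> (\<forall>r \<in> rules N x. is_del r) \<or>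
         (\<forall>r \<in> rules N x. is_ins r))) \<and>
     (\<forall>e \<in> edges N. fst (efilter N e) \<subseteq> net_alph N \<and> snd (efilter N e) \<subseteq> net_alph N \<and>
        fst (efilter N e) \<inter> snd (efilter N e) = {})"

definition complete_graph_size :: "'b anepfc \<Rightarrow> nat \<Rightarrow> bool" where
  "complete_graph_size N k \<longleftrightarrow> card (nodes N) = k \<and> finite (nodes N) \<and>
     edges N = {{x, y} | x y. x \<in> nodes N \<and> y \<in> nodes N \<and> x \<noteq> y}"

type_synonym 'b config = "nat \<Rightarrow> 'b list set"

definition init_config :: "'b anepfc \<Rightarrow> 'b list \<Rightarrow> 'b config" where
  "init_config N z = (\<lambda>x. if x = xin N then {z} else {})"

definition evol_step :: "'b anepfc \<Rightarrow> 'b config \<Rightarrow> 'b config" where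
  "evol_step N C = (\<lambda>x. if x \<in> nodes N then apply_rules (rules N x) (nmode N x) (C x) else C x)"

definition comm_step :: "'b anepfc \<Rightarrow> 'b config \<Rightarrow> 'b config" where
  "comm_step N C = (\<lambda>x.
     (C x - (\<Union>y \<in> {y. {x, y} \<in> edges N}. filt (emode N {x, y}) (C x) (efilter N {x, y})))
     \<union> (\<Union>y \<in> {y. {x, y} \<in> edges N}. filt (emode N {x, y}) (C y) (efilter N {x, y})))"

text \<open>Configuration after n steps: step 2k+1 is evolutionary, step 2k+2 communication.\<close>
fun run :: "'b anepfc \<Rightarrow> 'b list \<Rightarrow> nat \<Rightarrow> 'b config" where
  "run N z 0 = init_config N z"
| "run N z (Suc n) = (if even n then evol_step N (run N z n) else comm_step N (run N z n))"

text \<open>Halting by repetition at step n: the configuration produced by the n-th step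
  equals the one produced by the previous step of the same kind.\<close>
definition repeat_halt :: "'b anepfc \<Rightarrow> 'b list \<Rightarrow> nat \<Rightarrow> bool" where
  "repeat_halt N z n \<longleftrightarrow> 3 \<le> n \<and> run N z n = run N z (n - 2)"

definition accepting :: "'b anepfc \<Rightarrow> 'b list \<Rightarrow> bool" where
  "accepting N z \<longleftrightarrow> (\<exists>n. run N z n (xout N) \<noteq> {} \<and> (\<forall>m < n. \<not> repeat_halt N z m))"

definition accepted_lang :: "'b anepfc \<Rightarrow> 'b list set" where
  "accepted_lang N = {z \<in> lists (in_alph N). accepting N z}"

end

theory Submission
  imports Defs "HOL-Library.Countable" "HOL-Library.Nat_Bijection"
begin

text \<open>The network simulates a tag step on a word \<open>x y r\<close> at node 0 by a fixed cycle of
  local edits. The first letter \<open>x\<close> is replaced by a counter symbol holding a number that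
  encodes \<open>x\<close>, an accumulator is appended at the right end, and the value is moved to the
  accumulator one unit per round (nodes 3 to 6), after which the counter symbol is deleted at the
  left end. The accumulator now names \<open>x\<close> at the right end and is rewritten into the letters
  of \<open>phi x\<close> one at a time, each one carried over by the same kind of transfer, while \<open>y\<close>
  is marked and deleted like \<open>x\<close>. The edge filters of the complete graph force every word
  through this cycle, and only words of length less than 2 and the accumulator of the halting
  letter can enter the output node 9. Completeness is shown by exhibiting the simulating path;
  soundness by an invariant describing, node by node, every word that can occur when the input
  does not halt.\<close>

section \<open>Computations of networks\<close>

lemma run_repeat_shift:
  assumes "3 \<le> m" "run N z m = run N z (m - 2)"
  shows "run N z (m + k) = run N z (m - 2 + k)"
proof (induction k)
  case 0
  then show ?case using assms by simp
next
  case (Suc k)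
  have "m + k = (m - 2 + k) + 2" using assms(1) by simp
  then have "even (m + k) = even (m - 2 + k)" by simp
  then show ?case using Suc by simp
qed

text \<open>A repetition is periodic from then on, so it cannot occur before the first configuration
  with a word in the output node: the halting-by-repetition clause of acceptance is redundant.\<close>
lemma accepting_iff_output_reached: "accepting N z \<longleftrightarrow> (\<exists>n. run N z n (xout N) \<noteq> {})"
proof
  assume "\<exists>n. run N z n (xout N) \<noteq> {}"
  define n where "n = (LEAST n. run N z n (xout N) \<noteq> {})"
  have reached: "run N z n (xout N) \<noteq> {}"
    unfolding n_def by (rule LeastI_ex) fact
  have before: "\<And>j. j < n \<Longrightarrow> run N z j (xout N) = {}"
    unfolding n_def using not_less_Least by blast
  have "\<not> repeat_halt N z m" if "m < n" for m
  proof
    assume "repeat_halt N z m"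
    then have m3: "3 \<le> m" and rep: "run N z m = run N z (m - 2)"
      by (auto simp: repeat_halt_def)
    have "run N z (m + (n - m)) = run N z (m - 2 + (n - m))"
      by (rule run_repeat_shift[OF m3 rep])
    then have "run N z n = run N z (n - 2)"
      using that m3 by (simp add: algebra_simps)
    then show False
      using reached before[of "n - 2"] that m3 by simp
  qed
  then show "accepting N z"
    using reached unfolding accepting_def by blast
qed (auto simp: accepting_def)

lemma run_evol_mem:
  assumes "even n" "w \<in> run N z n p" "p \<in> nodes N" "\<sigma> \<in> rules N p" "w' \<in> rule_app \<sigma> (nmode N p) w"
  shows "w' \<in> run N z (Suc n) p"
  using assms by (auto simp: evol_step_def apply_rules_def)

lemma run_comm_mem:
  assumes "odd n" "w \<in> run N z n p" "{p, q} \<in> edges N"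
    "filt_word (emode N {p, q}) w (efilter N {p, q})"
  shows "w \<in> run N z (Suc n) q"
  using assms by (auto simp: comm_step_def filt_def insert_commute)

lemma run_invariant:
  fixes IE IC :: "nat \<Rightarrow> 'b list \<Rightarrow> bool"
  assumes init: "IE (xin N) z"
    and node: "\<And>p w. IE p w \<Longrightarrow> p \<in> nodes N"
    and evol: "\<And>p w \<sigma> w'. IE p w \<Longrightarrow> \<sigma> \<in> rules N p \<Longrightarrow> w' \<in> rule_app \<sigma> (nmode N p) w \<Longrightarrow> IC p w'"
    and stay: "\<And>p w. IC p w \<Longrightarrow> \<forall>q. {p, q} \<in> edges N \<longrightarrow> \<not> filt_word (emode N {p, q}) w (efilter N {p, q})
                 \<Longrightarrow> IE p w"
    and move: "\<And>p q w. IC p w \<Longrightarrow> {p, q} \<in> edges N \<Longrightarrow> filt_word (emode N {p, q}) w (efilter N {p, q})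
                 \<Longrightarrow> IE q w"
  shows "w \<in> run N z n p \<Longrightarrow> if even n then IE p w else IC p w"
proof (induction n arbitrary: p w)
  case 0
  then show ?case using init by (auto simp: init_config_def split: if_splits)
next
  case (Suc n)
  show ?case
  proof (cases "even n")
    case True
    then obtain w0 where w0: "w0 \<in> run N z n p" and "IE p w0"
      and "\<exists>\<sigma>\<in>rules N p. w \<in> rule_app \<sigma> (nmode N p) w0"
      using Suc node by (fastforce simp: evol_step_def apply_rules_def split: if_splits)
    then show ?thesis using True evol by auto
  next
    case False
    have IH: "\<And>p w. w \<in> run N z n p \<Longrightarrow> IC p w" using Suc.IH False by fastforce
    from Suc.prems False consider
        "w \<in> run N z n p" "\<forall>q. {p, q} \<in> edges N \<longrightarrow> \<not> filt_word (emode N {p, q}) w (efilter N {p, q})"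
      | q where "{q, p} \<in> edges N" "w \<in> run N z n q" "filt_word (emode N {q, p}) w (efilter N {q, p})"
      by (auto simp: comm_step_def filt_def insert_commute)
    then show ?thesis
    proof cases
      case 1
      then show ?thesis using IH stay False by simp
    next
      case (2 q)
      then show ?thesis using move[OF IH] False by simp
    qed
  qed
qed

lemma filt_word_weak_iff:
  "filt_word FWeak w (P, F) \<longleftrightarrow> (\<exists>s\<in>set w. s \<in> P) \<and> (\<forall>s\<in>set w. s \<notin> F)"
  by auto

lemma filt_word_strong_iff:
  "filt_word FStrong w (P, F) \<longleftrightarrow> (\<forall>s\<in>P. s \<in> set w) \<and> (\<forall>s\<in>set w. s \<notin> F)"
  by auto

lemma rule_app_Subst_cases:
  "w' \<in> rule_app (Subst a b) m w \<Longrightarrow> (a \<notin> set w \<and> w' = w) \<or> (\<exists>u v. w = u @ a # v \<and> w' = u @ b # v)"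
  by (auto split: if_splits)

lemma rule_app_Subst_absent: "w' \<in> rule_app (Subst a b) m w \<Longrightarrow> a \<notin> set w \<Longrightarrow> w' = w"
  by simp

lemma append_Cons_eq_unique:
  "u @ a # v = p @ a # q \<Longrightarrow> a \<notin> set p \<Longrightarrow> a \<notin> set q \<Longrightarrow> u = p \<and> v = q"
proof (induction p arbitrary: u)
  case Nil then show ?case by (cases u) auto
next
  case (Cons c p) then show ?case by (cases u) auto
qed

lemma rule_app_Subst_at:
  assumes "w' \<in> rule_app (Subst a b) m (p @ s # q)" "s \<notin> set p" "s \<notin> set q" "a \<notin> set p" "a \<notin> set q"
  shows "(a \<noteq> s \<and> w' = p @ s # q) \<or> (a = s \<and> w' = p @ b # q)"
  using rule_app_Subst_cases[OF assms(1)]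
proof
  assume "\<exists>u v. p @ s # q = u @ a # v \<and> w' = u @ b # v"
  then obtain u v where uv: "p @ s # q = u @ a # v" "w' = u @ b # v" by blast
  then have "a \<in> set (p @ s # q)" by simp
  then have "a = s" using assms(4,5) by auto
  with append_Cons_eq_unique[of u a v p q] uv assms(2,3) show ?thesis by auto
qed auto

lemma rule_app_Subst_mem: "u @ b # v \<in> rule_app (Subst a b) m (u @ a # v)"
  by auto

lemma rule_app_Subst_last:
  "w' \<in> rule_app (Subst a b) m (w @ [s]) \<Longrightarrow> a \<notin> set w \<Longrightarrow> s \<notin> set w
    \<Longrightarrow> w' = (if a = s then w @ [b] else w @ [s])"
  using rule_app_Subst_at[of w' a b m w s "[]"] by auto

lemma rule_app_Del_left_cases: "w' \<in> rule_app (Del a) ALeft w \<Longrightarrow> w' = w \<or> w = a # w'"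
  by (auto split: if_splits)

lemma map_Inl_split:
  assumes "u @ Inl c # v = map Inl t @ ms" "\<forall>s\<in>set ms. \<forall>d. s \<noteq> Inl d"
  shows "\<exists>t1 t2. t = t1 @ c # t2 \<and> u = map Inl t1 \<and> v = map Inl t2 @ ms"
  using assms(1)
proof (induction t arbitrary: u)
  case Nil
  then show ?case using assms(2) by (cases u) auto
next
  case (Cons d t)
  show ?case
  proof (cases u)
    case Nil
    then show ?thesis using Cons.prems by auto
  next
    case (Cons s u')
    with Cons.prems have "s = Inl d" "u' @ Inl c # v = map Inl t @ ms" by auto
    with Cons.IH obtain t1 t2 where "t = t1 @ c # t2" "u' = map Inl t1" "v = map Inl t2 @ ms" by blast
    with \<open>s = Inl d\<close> Cons show ?thesis by (intro exI[of _ "d # t1"] exI[of _ t2]) auto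
  qed
qed

section \<open>The simulating network\<close>

text \<open>A source counter \<open>Src k p n\<close> holds a value \<open>n\<close> to be moved, one unit per round, to the
  accumulator \<open>Acc p m\<close> at the right end of the word; the flag \<open>p\<close> marks the primed copy
  showing which half of a round has been done. The source is either the marked first letter
  (\<open>Lead\<close>) or a letter still to be written, given by its code.\<close>
datatype src = Lead | Letter nat

datatype marker = Src src bool nat | Acc bool nat | Fresh

instance src :: countable by countable_datatype
instance marker :: countable by countable_datatype

definition msym :: "marker \<Rightarrow> 'a + nat" where
  "msym m = Inr (to_nat m)"

lemma msym_eq_iff [simp]: "msym a = msym b \<longleftrightarrow> a = b" "msym a \<noteq> Inl x" "Inl x \<noteq> msym a"
  by (auto simp: msym_def)

lemma msym_notin_Inl_image [simp]: "msym m \<notin> Inl ` A" "Inl a \<notin> msym ` B"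
  by (auto simp: msym_def)

abbreviation lift :: "'a list \<Rightarrow> ('a + nat) list" where
  "lift \<equiv> map Inl"

definition ctr_word :: "src \<Rightarrow> 'a list \<Rightarrow> 'a list \<Rightarrow> nat \<Rightarrow> nat \<Rightarrow> bool \<Rightarrow> bool \<Rightarrow> ('a + nat) list" where
  "ctr_word k \<alpha> \<beta> n m ps pt = lift \<alpha> @ msym (Src k ps n) # lift \<beta> @ [msym (Acc pt m)]"

lemma set_ctr_word:
  "set (ctr_word k \<alpha> \<beta> n m ps pt) = Inl ` set \<alpha> \<union> Inl ` set \<beta> \<union> {msym (Src k ps n), msym (Acc pt m)}"
  by (auto simp: ctr_word_def)

locale tag_network =
  fixes V :: "'a set" and H :: 'a and phi :: "'a \<Rightarrow> 'a list" and code :: "'a \<Rightarrow> nat"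
  assumes tag: "tag_system V H phi" and code_inj: "inj_on code V"
begin

lemma finite_V: "finite V" and H_in_V: "H \<in> V"
  using tag by (auto simp: tag_system_def)

lemma phi_props:
  "x \<in> V - {H} \<Longrightarrow> phi x \<noteq> [] \<and> set (phi x) \<subseteq> V \<and> (2 \<le> length (phi x) \<or> phi x = [H])"
  using tag by (auto simp: tag_system_def)

lemma nonhalting_letter_exists: "\<exists>a. a \<in> V - {H}"
  using tag unfolding tag_system_def by blast

lemma phi_nth_in_V: "x \<in> V - {H} \<Longrightarrow> i < length (phi x) \<Longrightarrow> phi x ! i \<in> V"
  using phi_props[of x] by (meson nth_mem subsetD)

definition halting_letters :: "'a set" where
  "halting_letters = {x \<in> V - {H}. H \<in> set (phi x)}"

lemma phi_nonhalting:
  "x \<in> V - {H} \<Longrightarrow> x \<notin> halting_letters \<Longrightarrow> 2 \<le> length (phi x) \<and> set (phi x) \<subseteq> V - {H}"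
  using phi_props[of x] by (auto simp: halting_letters_def)

lemma tag_step_Cons2: "tag_step phi (x # y # r) = r @ phi x"
  by (simp add: tag_step_def)

lemma nonhalting_word_Cons2: "\<not> halting_word H u \<Longrightarrow> \<exists>x y r. u = x # y # r"
  by (cases u; cases "tl u") (auto simp: halting_word_def)

lemma halting_after_step_iff:
  assumes "x # y # r \<in> lists (V - {H})"
  shows "halting_word H (r @ phi x) \<longleftrightarrow> x \<in> halting_letters"
proof (cases "x \<in> halting_letters")
  case False
  then have "2 \<le> length (phi x)" "H \<notin> set (phi x)"
    using phi_nonhalting[of x] assms by auto
  then show ?thesis
    using assms False by (auto simp: halting_word_def)
qed (auto simp: halting_word_def halting_letters_def)

lemma tag_iter_in_lists:
  assumes "z \<in> lists (V - {H})" "\<forall>j\<le>k. \<not> halting_word H ((tag_step phi ^^ j) z)"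
  shows "(tag_step phi ^^ k) z \<in> lists (V - {H})"
  using assms(2)
proof (induction k)
  case (Suc k)
  have IH: "(tag_step phi ^^ k) z \<in> lists (V - {H})"
    by (rule Suc.IH) (use Suc.prems in auto)
  obtain x y r where u: "(tag_step phi ^^ k) z = x # y # r"
    using nonhalting_word_Cons2[OF Suc.prems[rule_format, of k]] by auto
  have step: "(tag_step phi ^^ Suc k) z = r @ phi x"
    using u by (simp add: tag_step_Cons2)
  then have "\<not> halting_word H (r @ phi x)"
    using Suc.prems[rule_format, of "Suc k"] by simp
  then have "x \<notin> halting_letters"
    using halting_after_step_iff[of x y r] IH u by simp
  then have "set (phi x) \<subseteq> V - {H}"
    using phi_nonhalting[of x] IH u by auto
  then show ?case
    using IH u step by auto
qed (use assms(1) in simp)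

text \<open>The counter value naming position \<open>i\<close> of the production of \<open>x\<close>; it is never
  \<open>0\<close>, which a source counter reaches exactly when its transfer is complete.\<close>
definition pos :: "'a \<Rightarrow> nat \<Rightarrow> nat" where
  "pos x i = Suc (prod_encode (code x, i))"

lemma pos_eq_iff [simp]: "x \<in> V \<Longrightarrow> y \<in> V \<Longrightarrow> pos x i = pos y j \<longleftrightarrow> x = y \<and> i = j"
  using code_inj by (auto simp: pos_def inj_on_def)

lemma pos_pos [simp]: "pos x i \<noteq> 0" "0 < pos x i"
  by (auto simp: pos_def)

definition max_pos :: nat where
  "max_pos = Max ((\<lambda>(x, i). pos x i) ` (SIGMA x:V - {H}. {..length (phi x)}))"

lemma pos_le_max: "x \<in> V - {H} \<Longrightarrow> i \<le> length (phi x) \<Longrightarrow> pos x i \<le> max_pos"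
  unfolding max_pos_def by (rule Max_ge) (auto simp: finite_V)

fun src_ok :: "src \<Rightarrow> bool" where
  "src_ok Lead = True"
| "src_ok (Letter c) = (c \<in> code ` V)"

fun marker_ok :: "marker \<Rightarrow> bool" where
  "marker_ok (Src k p n) = (src_ok k \<and> n \<le> max_pos)"
| "marker_ok (Acc p m) = (m \<le> max_pos)"
| "marker_ok Fresh = True"

lemma finite_marker_ok: "finite {m. marker_ok m}"
proof (rule finite_subset)
  let ?S = "insert Lead (Letter ` code ` V)"
  show "{m. marker_ok m} \<subseteq> (\<lambda>(k, p, n). Src k p n) ` (?S \<times> UNIV \<times> {..max_pos})
      \<union> (\<lambda>(p, m). Acc p m) ` (UNIV \<times> {..max_pos}) \<union> {Fresh}"
  proof
    fix m assume "m \<in> {m. marker_ok m}"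
    then show "m \<in> (\<lambda>(k, p, n). Src k p n) ` (?S \<times> UNIV \<times> {..max_pos})
      \<union> (\<lambda>(p, m). Acc p m) ` (UNIV \<times> {..max_pos}) \<union> {Fresh}"
    proof (cases m)
      case (Src k p n)
      then show ?thesis using \<open>m \<in> _\<close> by (cases k) (auto simp: image_iff)
    qed (auto simp: image_iff)
  qed
qed (use finite_V in auto)

definition alph :: "('a + nat) set" where
  "alph = Inl ` V \<union> msym ` {m. marker_ok m}"

lemma in_alph_iff [simp]: "msym m \<in> alph \<longleftrightarrow> marker_ok m" "Inl a \<in> alph \<longleftrightarrow> a \<in> V"
  by (auto simp: alph_def)

definition markers :: "(marker \<Rightarrow> bool) \<Rightarrow> ('a + nat) set" where
  "markers P = msym ` {m. marker_ok m \<and> P m}"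

lemma in_markers_iff [simp]: "msym m \<in> markers P \<longleftrightarrow> marker_ok m \<and> P m" "Inl a \<notin> markers P"
  by (auto simp: markers_def)

lemma Inl_image_Int_markers [simp]: "Inl ` A \<inter> markers P = {}" "markers P \<inter> Inl ` A = {}"
  by (auto simp: markers_def)

text \<open>The source counter created by emitting the first letter of a production; unlike later
  ones it must first go back to node 0, where the second letter of the word is deleted.\<close>
definition first_emit :: "marker \<Rightarrow> bool" where
  "first_emit m \<longleftrightarrow> (\<exists>x\<in>V - {H}. m = Src (Letter (code (phi x ! 0))) False (pos x 1))"

lemma not_first_emit [simp]:
  "\<not> first_emit (Acc p m)" "\<not> first_emit Fresh" "\<not> first_emit (Src Lead p n)" "\<not> first_emit (Src k True n)"
  by (auto simp: first_emit_def)

definition "lead_syms = markers (\<lambda>m. \<exists>n. m = Src Lead False n)"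
definition "lead_pos_syms = markers (\<lambda>m. \<exists>n. m = Src Lead False n \<and> 0 < n)"
definition "lead0_syms = markers (\<lambda>m. m = Src Lead False 0)"
definition "src_syms = markers (\<lambda>m. \<exists>k n. m = Src k False n)"
definition "src_primed_syms = markers (\<lambda>m. \<exists>k n. m = Src k True n)"
definition "first_emit_syms = markers first_emit"
definition "later_emit_syms = markers (\<lambda>m. (\<exists>c n. m = Src (Letter c) False n) \<and> \<not> first_emit m)"
definition "acc_syms = markers (\<lambda>m. \<exists>n. m = Acc False n)"
definition "acc_primed_syms = markers (\<lambda>m. \<exists>n. m = Acc True n)"
definition "acc_pos_syms = markers (\<lambda>m. \<exists>n. m = Acc False n \<and> 0 < n)"
definition "acc0_syms = markers (\<lambda>m. m = Acc False 0)"
definition "acc_read_syms = markers (\<lambda>m. \<exists>x\<in>V - {H}. m = Acc False (pos x 0))"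
definition "acc_emit_syms =
  markers (\<lambda>m. \<exists>x\<in>V - {H}. \<exists>j. 0 < j \<and> j < length (phi x) \<and> m = Acc False (pos x j))"
definition "acc_halt_syms = markers (\<lambda>m. \<exists>x\<in>halting_letters. m = Acc False (pos x 0))"
definition "fresh_syms = markers (\<lambda>m. m = Fresh)"
definition "non_lead_syms = Inl ` V \<union> markers (\<lambda>m. \<forall>n. m \<noteq> Src Lead False n)"

lemmas sym_class_defs = lead_syms_def lead_pos_syms_def lead0_syms_def src_syms_def
  src_primed_syms_def first_emit_syms_def later_emit_syms_def acc_syms_def acc_primed_syms_def
  acc_pos_syms_def acc0_syms_def acc_read_syms_def acc_emit_syms_def acc_halt_syms_def fresh_syms_def

text \<open>Node 0 marks a letter (or passes a word of length < 2 to the output node 9); 1 and 2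
  append an accumulator \<open>Acc False 0\<close>; 3 to 6 perform one round of the counter transfer
  (decrement the source, increment the accumulator, unprime both), and 3 also writes the letter
  of an exhausted source; 7 deletes a marked letter at the left end; 8 turns the accumulator
  value \<open>pos x i\<close> into the \<open>i\<close>-th letter of \<open>phi x\<close>.\<close>
definition net_rules :: "nat \<Rightarrow> ('a + nat) rule set" where
  "net_rules p =
    (if p = 0 then {Subst (Inl a) (msym (Src Lead False (pos a 0))) | a. a \<in> V - {H}}
     else if p = 1 then {Ins (msym Fresh)}
     else if p = 2 then {Subst (msym Fresh) (msym (Acc False 0))}
     else if p = 3 then
       {Subst (msym (Src k False n)) (msym (Src k True (n - 1))) | k n. src_ok k \<and> 0 < n \<and> n \<le> max_pos}
       \<union> {Subst (msym (Src (Letter (code a)) False 0)) (Inl a) | a. a \<in> V}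
     else if p = 4 then {Subst (msym (Acc False m)) (msym (Acc True (Suc m))) | m. m < max_pos}
     else if p = 5 then {Subst (msym (Src k True n)) (msym (Src k False n)) | k n. src_ok k \<and> n \<le> max_pos}
     else if p = 6 then {Subst (msym (Acc True m)) (msym (Acc False m)) | m. m \<le> max_pos}
     else if p = 7 then {Del (msym (Src Lead False n)) | n. n \<le> max_pos}
     else if p = 8 then
       {Subst (msym (Acc False (pos x i))) (msym (Src (Letter (code (phi x ! i))) False (pos x (Suc i))))
          | x i. x \<in> V - {H} \<and> Suc i < length (phi x)}
       \<union> {Subst (msym (Acc False (pos x i))) (Inl (phi x ! i)) | x i. x \<in> V - {H} \<and> Suc i = length (phi x)}
     else {})"

definition net_mode :: "nat \<Rightarrow> amode" where
  "net_mode p = (if p = 1 then ARight else if p = 7 then ALeft else AStar)"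

definition net_filter :: "nat set \<Rightarrow> ('a + nat) set \<times> ('a + nat) set" where
  "net_filter E =
    (if E = {0,1} then (lead_syms, fresh_syms)
     else if E = {0,8} then (Inl ` V \<union> first_emit_syms,
       lead_syms \<union> acc_syms \<union> fresh_syms \<union> src_primed_syms \<union> acc_primed_syms \<union> later_emit_syms)
     else if E = {0,9} then ({}, non_lead_syms)
     else if E = {1,2} then (fresh_syms, {})
     else if E = {1,8} then (later_emit_syms,
       fresh_syms \<union> acc_syms \<union> lead_syms \<union> first_emit_syms \<union> src_primed_syms \<union> acc_primed_syms)
     else if E = {2,3} then (acc0_syms, fresh_syms \<union> first_emit_syms \<union> src_primed_syms \<union> acc_primed_syms)
     else if E = {2,7} then (first_emit_syms, fresh_syms \<union> src_primed_syms \<union> acc_primed_syms \<union> acc_pos_syms)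
     else if E = {3,4} then (src_primed_syms, acc_primed_syms \<union> fresh_syms)
     else if E = {3,6} then (src_syms, src_primed_syms \<union> acc_primed_syms \<union> fresh_syms \<union> acc0_syms)
     else if E = {3,7} then (lead0_syms \<union> first_emit_syms,
       src_primed_syms \<union> acc_primed_syms \<union> fresh_syms \<union> lead_pos_syms)
     else if E = {3,8} then (acc_emit_syms, src_syms \<union> src_primed_syms \<union> fresh_syms \<union> acc_primed_syms)
     else if E = {4,5} then (acc_primed_syms, fresh_syms \<union> src_syms)
     else if E = {5,6} then (src_syms, src_primed_syms \<union> fresh_syms \<union> acc_syms)
     else if E = {7,8} then (acc_read_syms, src_syms \<union> src_primed_syms \<union> fresh_syms \<union> acc_primed_syms)
     else if E = {7,9} then (acc_halt_syms, src_syms \<union> src_primed_syms \<union> fresh_syms \<union> acc_primed_syms)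
     else ({}, {}))"

definition net_fmode :: "nat set \<Rightarrow> fmode" where
  "net_fmode E = (if E = {0,9} then FStrong else FWeak)"

definition net_nodes :: "nat set" where
  "net_nodes = {0..9}"

definition net_edges :: "nat set set" where
  "net_edges = {{x, y} | x y. x \<in> net_nodes \<and> y \<in> net_nodes \<and> x \<noteq> y}"

definition tag_net :: "('a + nat) anepfc" where
  "tag_net = \<lparr>net_alph = alph, in_alph = Inl ` (V - {H}), nodes = net_nodes, edges = net_edges,
     rules = net_rules, efilter = net_filter, nmode = net_mode, emode = net_fmode, xin = 0, xout = 9\<rparr>"

lemma net_rules_ok: "r \<in> net_rules p \<Longrightarrow> rule_ok r \<and> rule_syms r \<subseteq> alph"
  using phi_nth_in_V by (auto simp: net_rules_def split: if_splits intro!: pos_le_max)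

lemma net_rules_uniform:
  "(\<forall>r\<in>net_rules p. is_subst r) \<or> (\<forall>r\<in>net_rules p. is_del r) \<or> (\<forall>r\<in>net_rules p. is_ins r)"
  by (auto simp: net_rules_def)

definition filter_ok :: "('a + nat) set \<times> ('a + nat) set \<Rightarrow> bool" where
  "filter_ok PF \<longleftrightarrow> fst PF \<subseteq> alph \<and> snd PF \<subseteq> alph \<and> fst PF \<inter> snd PF = {}"

lemma filter_ok_if: "filter_ok a \<Longrightarrow> filter_ok b \<Longrightarrow> filter_ok (if c then a else b)"
  by simp

lemma net_filter_ok: "filter_ok (net_filter E)"
  unfolding net_filter_def
  by (intro filter_ok_if)
    (auto simp: filter_ok_def sym_class_defs non_lead_syms_def markers_def first_emit_def alph_def)

lemma wf_tag_net: "wf_anepfc tag_net"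
  unfolding wf_anepfc_def tag_net_def
  using finite_V finite_marker_ok net_rules_ok net_rules_uniform net_filter_ok
  by (auto simp: net_nodes_def net_edges_def alph_def filter_ok_def)

lemma tag_net_complete: "complete_graph_size tag_net 10"
  by (simp add: complete_graph_size_def tag_net_def net_nodes_def net_edges_def)

end

section \<open>Halting inputs are accepted\<close>

context tag_network
begin

abbreviation passes :: "nat \<Rightarrow> nat \<Rightarrow> ('a + nat) list \<Rightarrow> bool" where
  "passes p q w \<equiv> filt_word (net_fmode {p, q}) w (net_filter {p, q})"

lemma hop:
  assumes "w \<in> run tag_net z t p" "even t" "p \<in> net_nodes" "\<sigma> \<in> net_rules p"
    "w' \<in> rule_app \<sigma> (net_mode p) w" "q \<in> net_nodes" "p \<noteq> q" "passes p q w'"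
  shows "w' \<in> run tag_net z (t + 2) q"
proof -
  have "w' \<in> run tag_net z (Suc t) p"
    using run_evol_mem[of t w tag_net z p \<sigma> w'] assms by (simp add: tag_net_def)
  moreover have "{p, q} \<in> net_edges"
    using assms(3,6,7) by (auto simp: net_edges_def)
  ultimately have "w' \<in> run tag_net z (Suc (Suc t)) q"
    using run_comm_mem[of "Suc t" w' tag_net z p q] assms by (simp add: tag_net_def)
  then show ?thesis by simp
qed

lemma hop_subst:
  assumes "w \<in> run tag_net z t p" "even t" "w = u @ a # v" "Subst a b \<in> net_rules p"
    "p \<in> net_nodes" "q \<in> net_nodes" "p \<noteq> q" "passes p q (u @ b # v)"
  shows "u @ b # v \<in> run tag_net z (t + 2) q"
  by (rule hop[OF assms(1,2,5,4) _ assms(6-8)]) (simp only: assms(3) rule_app_Subst_mem)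

lemma hop_subst_head:
  assumes "a # v \<in> run tag_net z t p" "even t" "Subst a b \<in> net_rules p"
    "p \<in> net_nodes" "q \<in> net_nodes" "p \<noteq> q" "passes p q (b # v)"
  shows "b # v \<in> run tag_net z (t + 2) q"
  using hop_subst[of "a # v" z t p "[]" a v b q] assms by simp

lemma hop_subst_absent:
  assumes "w \<in> run tag_net z t p" "even t" "Subst a b \<in> net_rules p" "a \<notin> set w"
    "p \<in> net_nodes" "q \<in> net_nodes" "p \<noteq> q" "passes p q w"
  shows "w \<in> run tag_net z (t + 2) q"
  by (rule hop[OF assms(1,2,5,3) _ assms(6-8)]) (simp add: assms(4))

lemma hop_del_left:
  assumes "a # w \<in> run tag_net z t p" "even t" "Del a \<in> net_rules p" "net_mode p = ALeft"
    "p \<in> net_nodes" "q \<in> net_nodes" "p \<noteq> q" "passes p q w"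
  shows "w \<in> run tag_net z (t + 2) q"
  by (rule hop[OF assms(1,2,5,3) _ assms(6-8)]) (simp add: assms(4))

lemma hop_ins_right:
  assumes "w \<in> run tag_net z t p" "even t" "Ins a \<in> net_rules p" "net_mode p = ARight"
    "p \<in> net_nodes" "q \<in> net_nodes" "p \<noteq> q" "passes p q (w @ [a])"
  shows "w @ [a] \<in> run tag_net z (t + 2) q"
  by (rule hop[OF assms(1,2,5,3) _ assms(6-8)]) (simp add: assms(4))

lemmas hop_simps = net_rules_def ball_Un bex_Un filt_word_weak_iff filt_word_strong_iff first_emit_def
  net_nodes_def net_mode_def net_fmode_def net_filter_def doubleton_eq_iff set_ctr_word
  sym_class_defs non_lead_syms_def

lemma transfer_round:
  assumes w: "ctr_word k \<alpha> \<beta> (Suc n) m False False \<in> run tag_net z t 3" and t: "even t"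
    and bound: "Suc n + m \<le> max_pos" and k: "src_ok k"
  shows "ctr_word k \<alpha> \<beta> n (Suc m) False False \<in> run tag_net z (t + 8) 3"
proof -
  let ?S = "\<lambda>p n. msym (Src k p n)" and ?A = "\<lambda>p m. msym (Acc p m)"
  have "lift \<alpha> @ ?S True n # lift \<beta> @ [?A False m] \<in> run tag_net z (t + 2) 4"
    by (rule hop_subst[OF w t, where a = "?S False (Suc n)"])
      (use k bound in \<open>auto simp: ctr_word_def hop_simps\<close>)
  then have "(lift \<alpha> @ ?S True n # lift \<beta>) @ [?A True (Suc m)] \<in> run tag_net z (t + 2 + 2) 5"
    by (rule hop_subst[where a = "?A False m"]) (use t k bound in \<open>auto simp: hop_simps\<close>)
  then have "lift \<alpha> @ ?S False n # lift \<beta> @ [?A True (Suc m)] \<in> run tag_net z (t + 2 + 2 + 2) 6"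
    by (rule hop_subst[where a = "?S True n"]) (use t k bound in \<open>auto simp: hop_simps\<close>)
  then have "(lift \<alpha> @ ?S False n # lift \<beta>) @ [?A False (Suc m)] \<in> run tag_net z (t + 2 + 2 + 2 + 2) 3"
    by (rule hop_subst[where a = "?A True (Suc m)"]) (use t k bound in \<open>auto simp: hop_simps\<close>)
  then show ?thesis by (simp add: ctr_word_def eval_nat_numeral del: run.simps)
qed

lemma transfer:
  assumes "ctr_word k \<alpha> \<beta> n m False False \<in> run tag_net z t 3" "even t" "n + m \<le> max_pos" "src_ok k"
  shows "ctr_word k \<alpha> \<beta> 0 (n + m) False False \<in> run tag_net z (t + 8 * n) 3"
  using assms
proof (induction n arbitrary: t m)
  case (Suc n)
  have "ctr_word k \<alpha> \<beta> n (Suc m) False False \<in> run tag_net z (t + 8) 3"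
    by (rule transfer_round[OF Suc.prems(1,2)]) (use Suc.prems in auto)
  from Suc.IH[OF this] Suc.prems show ?case by (simp add: algebra_simps)
qed simp

lemma read_letter:
  assumes w: "lift (x # v) \<in> run tag_net z t 0" and t: "even t" and x: "x \<in> V - {H}"
  shows "\<exists>t'. even t' \<and> msym (Src Lead False 0) # lift v @ [msym (Acc False (pos x 0))] \<in> run tag_net z t' 7"
proof -
  let ?lead = "msym (Src Lead False (pos x 0))"
  have bound: "pos x 0 \<le> max_pos" using x by (intro pos_le_max) auto
  have "?lead # lift v \<in> run tag_net z (t + 2) 1"
    by (rule hop_subst_head[OF w[simplified] t]) (use x bound in \<open>auto simp: hop_simps\<close>)
  then have "(?lead # lift v) @ [msym Fresh] \<in> run tag_net z (t + 2 + 2) 2"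
    by (rule hop_ins_right) (use t in \<open>auto simp: hop_simps\<close>)
  then have "(?lead # lift v) @ [msym (Acc False 0)] \<in> run tag_net z (t + 2 + 2 + 2) 3"
    by (rule hop_subst) (use t bound in \<open>auto simp: hop_simps\<close>)
  then have "ctr_word Lead [] v (pos x 0) 0 False False \<in> run tag_net z (t + 6) 3"
    by (simp add: ctr_word_def eval_nat_numeral del: run.simps)
  then have "ctr_word Lead [] v 0 (pos x 0 + 0) False False \<in> run tag_net z (t + 6 + 8 * pos x 0) 3"
    by (rule transfer) (use t bound in auto)
  then have "ctr_word Lead [] v 0 (pos x 0 + 0) False False \<in> run tag_net z (t + 6 + 8 * pos x 0 + 2) 7"
    by (rule hop_subst_absent[where a = "msym (Src (Letter (code H)) False 0)"])
      (use t bound H_in_V in \<open>auto simp: hop_simps\<close>)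
  then show ?thesis
    using t by (intro exI[of _ "t + 6 + 8 * pos x 0 + 2"]) (simp add: ctr_word_def)
qed

lemma delete_lead:
  assumes w: "msym (Src Lead False 0) # lift v @ [msym (Acc False (pos x 0))] \<in> run tag_net z t 7"
    and t: "even t" and x: "x \<in> V - {H}"
  shows "lift v @ [msym (Acc False (pos x 0))] \<in> run tag_net z (t + 2) (if x \<in> halting_letters then 9 else 8)"
proof -
  have "pos x 0 \<le> max_pos" using x by (intro pos_le_max) auto
  show ?thesis
    by (rule hop_del_left[OF w t])
      (use x \<open>pos x 0 \<le> max_pos\<close> in \<open>auto simp: hop_simps halting_letters_def intro!: bexI[of _ x]\<close>)
qed

lemma emit_first_letter:
  assumes w: "lift (y # r) @ [msym (Acc False (pos x 0))] \<in> run tag_net z t 8" and t: "even t"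
    and x: "x \<in> V - {H}" "x \<notin> halting_letters" and y: "y \<in> V - {H}"
  shows "ctr_word (Letter (code (phi x ! 0))) r [] (pos x 1) 0 False False \<in> run tag_net z (t + 10) 3"
proof -
  let ?F = "msym (Src (Letter (code (phi x ! 0))) False (pos x 1))"
    and ?lead = "msym (Src Lead False (pos y 0))"
  have len: "2 \<le> length (phi x)" using phi_nonhalting[OF x] by simp
  have bounds: "pos x 0 \<le> max_pos" "pos x 1 \<le> max_pos" "pos y 0 \<le> max_pos"
    using x y len by (auto intro!: pos_le_max)
  have first: "first_emit (Src (Letter (code (phi x ! 0))) False (pos x 1))"
    using x by (auto simp: first_emit_def)
  have code_ok: "code (phi x ! 0) \<in> code ` V"
    using phi_nth_in_V[OF x(1), of 0] len by fastforce
  have "lift (y # r) @ [?F] \<in> run tag_net z (t + 2) 0"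
    by (rule hop_subst[OF w t])
      (use x len bounds first code_ok y in \<open>auto simp: hop_simps intro!: exI[of _ x] exI[of _ 0]\<close>)
  then have "Inl y # lift r @ [?F] \<in> run tag_net z (t + 2) 0"
    by (simp del: run.simps)
  then have "?lead # lift r @ [?F] \<in> run tag_net z (t + 2 + 2) 1"
    by (rule hop_subst_head) (use t y bounds code_ok in \<open>auto simp: hop_simps\<close>)
  then have "(?lead # lift r @ [?F]) @ [msym Fresh] \<in> run tag_net z (t + 2 + 2 + 2) 2"
    by (rule hop_ins_right) (use t in \<open>auto simp: hop_simps\<close>)
  then have "(?lead # lift r @ [?F]) @ [msym (Acc False 0)] \<in> run tag_net z (t + 2 + 2 + 2 + 2) 7"
    by (rule hop_subst) (use t bounds first code_ok in \<open>auto simp: hop_simps\<close>)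
  then have "?lead # lift r @ [?F, msym (Acc False 0)] \<in> run tag_net z (t + 2 + 2 + 2 + 2) 7"
    by (simp del: run.simps)
  then have "lift r @ [?F, msym (Acc False 0)] \<in> run tag_net z (t + 2 + 2 + 2 + 2 + 2) 3"
    by (rule hop_del_left) (use t bounds first code_ok in \<open>auto simp: hop_simps\<close>)
  then show ?thesis by (simp add: ctr_word_def eval_nat_numeral del: run.simps)
qed

lemma write_letter:
  assumes w: "ctr_word (Letter (code (phi x ! i))) (r @ take i (phi x)) [] (pos x (Suc i)) 0 False False
      \<in> run tag_net z t 3"
    and t: "even t" and x: "x \<in> V - {H}" and i: "Suc i < length (phi x)"
  shows "\<exists>t'. even t' \<and> lift (r @ take (Suc i) (phi x)) @ [msym (Acc False (pos x (Suc i)))] \<in> run tag_net z t' 8"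
proof -
  let ?c = "code (phi x ! i)" and ?n = "pos x (Suc i)" and ?\<alpha> = "r @ take i (phi x)"
  have letter: "phi x ! i \<in> V" using phi_nth_in_V x i by simp
  have bound: "?n \<le> max_pos" using x i by (intro pos_le_max) auto
  have "ctr_word (Letter ?c) ?\<alpha> [] 0 (?n + 0) False False \<in> run tag_net z (t + 8 * ?n) 3"
    by (rule transfer[OF w t]) (use bound letter in auto)
  then have "lift ?\<alpha> @ msym (Src (Letter ?c) False 0) # [msym (Acc False ?n)] \<in> run tag_net z (t + 8 * ?n) 3"
    by (simp add: ctr_word_def del: run.simps)
  then have "lift ?\<alpha> @ Inl (phi x ! i) # [msym (Acc False ?n)] \<in> run tag_net z (t + 8 * ?n + 2) 8"
    by (rule hop_subst[where a = "msym (Src (Letter ?c) False 0)"])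
      (use t x i bound letter in \<open>auto simp: hop_simps intro!: bexI[of _ x] exI[of _ "Suc i"]\<close>)
  moreover have "take (Suc i) (phi x) = take i (phi x) @ [phi x ! i]"
    using i by (simp add: take_Suc_conv_app_nth)
  ultimately show ?thesis
    using t by (intro exI[of _ "t + 8 * ?n + 2"]) simp
qed

lemma emit_next_letter:
  assumes w: "lift (r @ take (Suc i) (phi x)) @ [msym (Acc False (pos x (Suc i)))] \<in> run tag_net z t 8"
    and t: "even t" and x: "x \<in> V - {H}" and i: "Suc (Suc i) < length (phi x)"
  shows "ctr_word (Letter (code (phi x ! Suc i))) (r @ take (Suc i) (phi x)) [] (pos x (Suc (Suc i))) 0 False False
      \<in> run tag_net z (t + 6) 3"
proof -
  let ?P = "msym (Src (Letter (code (phi x ! Suc i))) False (pos x (Suc (Suc i))))"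
    and ?\<alpha> = "r @ take (Suc i) (phi x)"
  have bounds: "pos x (Suc i) \<le> max_pos" "pos x (Suc (Suc i)) \<le> max_pos"
    using x i by (auto intro!: pos_le_max)
  have code_ok: "code (phi x ! Suc i) \<in> code ` V"
    using phi_nth_in_V[OF x, of "Suc i"] i by simp
  have "lift ?\<alpha> @ [?P] \<in> run tag_net z (t + 2) 1"
    by (rule hop_subst[OF w t])
      (use x i bounds code_ok in \<open>auto simp: hop_simps intro!: exI[of _ x] exI[of _ "Suc i"]\<close>)
  then have "(lift ?\<alpha> @ [?P]) @ [msym Fresh] \<in> run tag_net z (t + 2 + 2) 2"
    by (rule hop_ins_right) (use t in \<open>auto simp: hop_simps\<close>)
  then have "(lift ?\<alpha> @ [?P]) @ [msym (Acc False 0)] \<in> run tag_net z (t + 2 + 2 + 2) 3"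
    by (rule hop_subst) (use t x bounds code_ok in \<open>auto simp: hop_simps\<close>)
  then show ?thesis by (simp add: ctr_word_def eval_nat_numeral del: run.simps)
qed

lemma emit_last_letter:
  assumes w: "lift (r @ take (Suc i) (phi x)) @ [msym (Acc False (pos x (Suc i)))] \<in> run tag_net z t 8"
    and t: "even t" and x: "x \<in> V - {H}" and i: "Suc (Suc i) = length (phi x)"
  shows "lift (r @ phi x) \<in> run tag_net z (t + 2) 0"
proof -
  have bound: "pos x (Suc i) \<le> max_pos" using x i by (intro pos_le_max) auto
  have letter: "phi x ! Suc i \<in> V" using phi_nth_in_V[OF x, of "Suc i"] i by simp
  have "lift (r @ take (Suc i) (phi x)) @ [Inl (phi x ! Suc i)] \<in> run tag_net z (t + 2) 0"
    by (rule hop_subst[OF w t])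
      (use x i bound letter in \<open>auto simp: hop_simps intro!: exI[of _ x] exI[of _ "Suc i"]\<close>)
  moreover have "take (Suc i) (phi x) @ [phi x ! Suc i] = phi x"
    using take_Suc_conv_app_nth[of "Suc i" "phi x"] i by simp
  then have "lift (phi x) = lift (take (Suc i) (phi x)) @ [Inl (phi x ! Suc i)]"
    by (metis list.map(1,2) map_append)
  ultimately show ?thesis
    by (simp del: run.simps)
qed

lemma emit_production:
  assumes "ctr_word (Letter (code (phi x ! i))) (r @ take i (phi x)) [] (pos x (Suc i)) 0 False False
      \<in> run tag_net z t 3"
    and "even t" "x \<in> V - {H}" "Suc i < length (phi x)"
  shows "\<exists>t'. even t' \<and> lift (r @ phi x) \<in> run tag_net z t' 0"
  using assms
proof (induction "length (phi x) - Suc (Suc i)" arbitrary: i t)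
  case 0
  obtain t' where "even t'"
    "lift (r @ take (Suc i) (phi x)) @ [msym (Acc False (pos x (Suc i)))] \<in> run tag_net z t' 8"
    using write_letter[OF "0.prems"] by blast
  then show ?case
    using emit_last_letter "0" by (intro exI[of _ "t' + 2"]) auto
next
  case (Suc n)
  obtain t' where "even t'"
    "lift (r @ take (Suc i) (phi x)) @ [msym (Acc False (pos x (Suc i)))] \<in> run tag_net z t' 8"
    using write_letter[OF Suc.prems] by blast
  then have "ctr_word (Letter (code (phi x ! Suc i))) (r @ take (Suc i) (phi x)) [] (pos x (Suc (Suc i))) 0 False False
      \<in> run tag_net z (t' + 6) 3"
    using emit_next_letter Suc by simp
  then show ?case
    using Suc.hyps(1)[of "Suc i"] Suc \<open>even t'\<close> by simp
qed

lemma simulate_tag_step: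
  assumes w: "lift (x # y # r) \<in> run tag_net z t 0" and t: "even t"
    and x: "x \<in> V - {H}" "x \<notin> halting_letters" and y: "y \<in> V - {H}"
  shows "\<exists>t'. even t' \<and> lift (r @ phi x) \<in> run tag_net z t' 0"
proof -
  obtain t1 where t1: "even t1"
    "msym (Src Lead False 0) # lift (y # r) @ [msym (Acc False (pos x 0))] \<in> run tag_net z t1 7"
    using read_letter[OF w t x(1)] by blast
  have read: "lift (y # r) @ [msym (Acc False (pos x 0))] \<in> run tag_net z (t1 + 2) 8"
    using delete_lead[OF t1(2,1) x(1)] x(2) by simp
  have "ctr_word (Letter (code (phi x ! 0))) (r @ take 0 (phi x)) [] (pos x (Suc 0)) 0 False False
      \<in> run tag_net z (t1 + 2 + 10) 3"
    using emit_first_letter[OF read _ x y] t1 by simp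
  then show ?thesis
    by (rule emit_production) (use t1 x phi_nonhalting[OF x] in auto)
qed

lemma short_word_accepted:
  assumes w: "lift u \<in> run tag_net z t 0" and t: "even t"
    and u: "u \<in> lists (V - {H})" "length u < 2"
  shows "\<exists>n. run tag_net z n 9 \<noteq> {}"
proof -
  consider "u = []" | x where "u = [x]"
    using u(2) by (cases u) auto
  then show ?thesis
  proof cases
    case 1
    obtain a where a: "a \<in> V - {H}" using nonhalting_letter_exists by blast
    have "[] \<in> run tag_net z (t + 2) 9"
      by (rule hop_subst_absent[where a = "Inl a"]) (use w 1 t a in \<open>auto simp: hop_simps\<close>)
    then show ?thesis by blast
  next
    case (2 x)
    then have "pos x 0 \<le> max_pos" using u by (intro pos_le_max) auto
    then have "[msym (Src Lead False (pos x 0))] \<in> run tag_net z (t + 2) 9"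
      by (intro hop_subst_head) (use w 2 t u in \<open>auto simp: hop_simps\<close>)
    then show ?thesis by blast
  qed
qed

lemma halting_head_accepted:
  assumes w: "lift (x # v) \<in> run tag_net z t 0" and t: "even t" and x: "x \<in> halting_letters"
  shows "\<exists>n. run tag_net z n 9 \<noteq> {}"
proof -
  have x': "x \<in> V - {H}" using x by (simp add: halting_letters_def)
  obtain t1 where "even t1"
    "msym (Src Lead False 0) # lift v @ [msym (Acc False (pos x 0))] \<in> run tag_net z t1 7"
    using read_letter[OF w t x'] by blast
  then have "lift v @ [msym (Acc False (pos x 0))] \<in> run tag_net z (t1 + 2) 9"
    using delete_lead[of v x z t1] x' x by simp
  then show ?thesis by blast
qed

lemma simulate_tag_steps:
  assumes z: "z \<in> lists (V - {H})" and nh: "\<forall>j\<le>k. \<not> halting_word H ((tag_step phi ^^ j) z)"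
  shows "\<exists>t. even t \<and> lift ((tag_step phi ^^ k) z) \<in> run tag_net (lift z) t 0"
  using nh
proof (induction k)
  case 0
  then show ?case by (intro exI[of _ 0]) (simp add: init_config_def tag_net_def)
next
  case (Suc k)
  obtain t where t: "even t" "lift ((tag_step phi ^^ k) z) \<in> run tag_net (lift z) t 0"
    using Suc.IH Suc.prems by auto
  obtain x y r where u: "(tag_step phi ^^ k) z = x # y # r"
    using nonhalting_word_Cons2[OF Suc.prems[rule_format, of k]] by auto
  have lists: "x # y # r \<in> lists (V - {H})"
    using tag_iter_in_lists[OF z, of k] Suc.prems u by simp
  have "(tag_step phi ^^ Suc k) z = r @ phi x"
    using u by (simp add: tag_step_Cons2)
  then have "\<not> halting_word H (r @ phi x)"
    using Suc.prems[rule_format, of "Suc k"] by simp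
  then have "x \<notin> halting_letters"
    using halting_after_step_iff[OF lists] by simp
  then show ?case
    using simulate_tag_step[of x y r "lift z" t] t u lists by (simp add: tag_step_Cons2)
qed

theorem halting_input_accepted:
  assumes z: "z \<in> lists (V - {H})" and h: "tag_halts H phi z"
  shows "\<exists>n. run tag_net (lift z) n 9 \<noteq> {}"
proof -
  obtain n where n: "halting_word H ((tag_step phi ^^ n) z)"
    and before: "\<forall>j<n. \<not> halting_word H ((tag_step phi ^^ j) z)"
    using h exists_least_iff[of "\<lambda>n. halting_word H ((tag_step phi ^^ n) z)"] by (auto simp: tag_halts_def)
  show ?thesis
  proof (cases n)
    case 0
    have "lift z \<in> run tag_net (lift z) 0 0" by (simp add: init_config_def tag_net_def)
    moreover have "length z < 2" using n 0 z by (auto simp: halting_word_def)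
    ultimately show ?thesis using short_word_accepted z by blast
  next
    case (Suc k)
    then have nh: "\<forall>j\<le>k. \<not> halting_word H ((tag_step phi ^^ j) z)" using before by simp
    obtain t where t: "even t" "lift ((tag_step phi ^^ k) z) \<in> run tag_net (lift z) t 0"
      using simulate_tag_steps[OF z nh] by blast
    obtain x y r where u: "(tag_step phi ^^ k) z = x # y # r"
      using nonhalting_word_Cons2[OF nh[rule_format, of k]] by auto
    have "x # y # r \<in> lists (V - {H})"
      using tag_iter_in_lists[OF z nh] u by simp
    moreover have "halting_word H (r @ phi x)"
      using n Suc u by (simp add: tag_step_Cons2)
    ultimately have "x \<in> halting_letters"
      using halting_after_step_iff by blast
    then show ?thesis
      using halting_head_accepted[of x "y # r"] t u by simp
  qed
qed

end

section \<open>Non-halting inputs never reach the output node\<close>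

text \<open>The invariant is stated relative to a set \<open>R\<close> of tag words closed under the tag
  operation, none of which halts or is followed by a halting word; for a non-halting input,
  \<open>R\<close> is the set of its iterates.\<close>
locale nonhalting_orbit = tag_network +
  fixes R :: "'a list set"
  assumes orbit_good: "u \<in> R \<Longrightarrow> u \<in> lists (V - {H}) \<and> 2 \<le> length u \<and> hd u \<notin> halting_letters"
    and orbit_step: "u \<in> R \<Longrightarrow> tag_step phi u \<in> R"
begin

lemma orbit_Cons2:
  assumes "x # y # r \<in> R"
  shows "x \<in> V - {H}" "y \<in> V - {H}" "set r \<subseteq> V - {H}" "x \<notin> halting_letters"
    "2 \<le> length (phi x)" "set (phi x) \<subseteq> V - {H}" "r @ phi x \<in> R"
proof -
  show x: "x \<in> V - {H}" "y \<in> V - {H}" "set r \<subseteq> V - {H}" "x \<notin> halting_letters"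
    using orbit_good[OF assms] by auto
  show "2 \<le> length (phi x)" "set (phi x) \<subseteq> V - {H}"
    using phi_nonhalting[OF x(1,4)] by auto
  show "r @ phi x \<in> R"
    using orbit_step[OF assms] by (simp add: tag_step_Cons2)
qed

lemma orbit_split:
  assumes "u1 @ a # u2 \<in> R"
  shows "a \<in> V - {H}" "set u1 \<subseteq> V - {H}" "set u2 \<subseteq> V - {H}" "u1 \<noteq> [] \<or> u2 \<noteq> []"
  using orbit_good[OF assms] by auto

lemma orbit_Cons2_ex: "u \<in> R \<Longrightarrow> \<exists>x y r. u = x # y # r"
  using orbit_good[of u] by (cases u; cases "tl u") auto

definition first_pending :: "'a \<Rightarrow> 'a + nat" where
  "first_pending x = msym (Src (Letter (code (phi x ! 0))) False (pos x 1))"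

definition appended :: "'a + nat \<Rightarrow> (('a + nat) list \<Rightarrow> bool) \<Rightarrow> ('a + nat) list \<Rightarrow> bool" where
  "appended s P w \<longleftrightarrow> (\<exists>w0. P w0 \<and> w = w0 @ [s])"

definition "in_orbit w \<longleftrightarrow> (\<exists>u\<in>R. w = lift u)"

definition "first_emitted w \<longleftrightarrow> (\<exists>x y r. x # y # r \<in> R \<and> w = lift (y # r) @ [first_pending x])"

definition "lead_marked w \<longleftrightarrow>
  (\<exists>u1 a u2. u1 @ a # u2 \<in> R \<and> w = lift u1 @ msym (Src Lead False (pos a 0)) # lift u2)"

definition "first_emitted_marked w \<longleftrightarrow> (\<exists>x y r v1 b v2. x # y # r \<in> R \<and> y # r = v1 @ b # v2 \<and>
  w = lift v1 @ msym (Src Lead False (pos b 0)) # lift v2 @ [first_pending x])"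

definition "later_emitted w \<longleftrightarrow> (\<exists>x y r i. x # y # r \<in> R \<and> 0 < i \<and> Suc i < length (phi x) \<and>
  w = lift (r @ take i (phi x)) @ [msym (Src (Letter (code (phi x ! i))) False (pos x (Suc i)))])"

definition "head_read w \<longleftrightarrow> (\<exists>x y r. x # y # r \<in> R \<and> w = lift (y # r) @ [msym (Acc False (pos x 0))])"

definition "letter_written w \<longleftrightarrow> (\<exists>x y r i. x # y # r \<in> R \<and> Suc i < length (phi x) \<and>
  w = lift (r @ take (Suc i) (phi x)) @ [msym (Acc False (pos x (Suc i)))])"

text \<open>A marked letter \<open>a\<close> transfers \<open>pos a 0\<close>; the source of the \<open>i\<close>-th letter of
  \<open>phi x\<close> transfers \<open>pos x (Suc i)\<close>, so that once the letter is written the accumulator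
  names the next position.\<close>
definition transfer_ok :: "src \<Rightarrow> 'a list \<Rightarrow> 'a list \<Rightarrow> nat \<Rightarrow> bool" where
  "transfer_ok k \<alpha> \<beta> tot \<longleftrightarrow> (\<exists>a. \<alpha> @ a # \<beta> \<in> R \<and> k = Lead \<and> tot = pos a 0) \<or>
   (\<exists>x y r i. x # y # r \<in> R \<and> Suc i < length (phi x) \<and> \<alpha> = r @ take i (phi x) \<and> \<beta> = [] \<and>
      k = Letter (code (phi x ! i)) \<and> tot = pos x (Suc i))"

text \<open>During a transfer the total is conserved, except that between decrementing the source
  (priming it) and incrementing the accumulator one unit is in flight.\<close>
definition counting :: "bool \<Rightarrow> bool \<Rightarrow> (src \<Rightarrow> nat \<Rightarrow> nat \<Rightarrow> bool) \<Rightarrow> ('a + nat) list \<Rightarrow> bool" where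
  "counting ps pt Q w \<longleftrightarrow> (\<exists>k \<alpha> \<beta> n m tot. transfer_ok k \<alpha> \<beta> tot \<and>
     n + m + (if ps \<and> \<not> pt then 1 else 0) = tot \<and> (pt \<longrightarrow> 1 \<le> m) \<and> Q k n m \<and> w = ctr_word k \<alpha> \<beta> n m ps pt)"

lemma transfer_ok_bounds:
  assumes "transfer_ok k \<alpha> \<beta> tot"
  shows "tot \<le> max_pos \<and> src_ok k \<and> set \<alpha> \<subseteq> V - {H} \<and> set \<beta> \<subseteq> V - {H}"
  using assms unfolding transfer_ok_def
proof (elim disjE exE conjE)
  fix a assume a: "\<alpha> @ a # \<beta> \<in> R" "k = Lead" "tot = pos a 0"
  show ?thesis
    using orbit_split[OF a(1)] a(2,3) by (auto intro: pos_le_max)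
next
  fix x y r i assume a: "x # y # r \<in> R" "Suc i < length (phi x)" "\<alpha> = r @ take i (phi x)" "\<beta> = []"
    "k = Letter (code (phi x ! i))" "tot = pos x (Suc i)"
  have "phi x ! i \<in> set (phi x)" using a(2) by simp
  then have "phi x ! i \<in> V - {H}" "set (take i (phi x)) \<subseteq> V - {H}"
    using orbit_Cons2(6)[OF a(1)] set_take_subset[of i "phi x"] by auto
  then show ?thesis
    using orbit_Cons2(1,3)[OF a(1)] a by (auto intro: pos_le_max)
qed

lemma countingI:
  "transfer_ok k \<alpha> \<beta> tot \<Longrightarrow> n + m + (if ps \<and> \<not> pt then 1 else 0) = tot \<Longrightarrow> (pt \<longrightarrow> 1 \<le> m) \<Longrightarrow> Q k n m
    \<Longrightarrow> w = ctr_word k \<alpha> \<beta> n m ps pt \<Longrightarrow> counting ps pt Q w"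
  unfolding counting_def by blast

lemma countingE:
  assumes "counting ps pt Q w"
  obtains k \<alpha> \<beta> n m tot where "transfer_ok k \<alpha> \<beta> tot" "n + m + (if ps \<and> \<not> pt then 1 else 0) = tot"
    "pt \<longrightarrow> 1 \<le> m" "Q k n m" "w = ctr_word k \<alpha> \<beta> n m ps pt"
    "n \<le> max_pos" "m \<le> max_pos" "src_ok k"
  using assms transfer_ok_bounds unfolding counting_def by fastforce

lemma countingE_exact:
  assumes "counting ps pt Q w"
  obtains k \<alpha> \<beta> n m where "w = ctr_word k \<alpha> \<beta> n m ps pt" "n \<le> max_pos" "m \<le> max_pos" "src_ok k"
    "pt \<longrightarrow> 1 \<le> m" "Q k n m" "\<And>Q'. Q' k n m \<Longrightarrow> counting ps pt Q' (ctr_word k \<alpha> \<beta> n m ps pt)"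
proof -
  from assms obtain k \<alpha> \<beta> n m tot where ok: "transfer_ok k \<alpha> \<beta> tot"
    and sum: "n + m + (if ps \<and> \<not> pt then 1 else 0) = tot" and m: "pt \<longrightarrow> 1 \<le> m"
    and Q: "Q k n m" and w: "w = ctr_word k \<alpha> \<beta> n m ps pt"
    unfolding counting_def by blast
  have "counting ps pt Q' (ctr_word k \<alpha> \<beta> n m ps pt)" if "Q' k n m" for Q'
    using countingI[where Q = Q', OF ok sum m that refl] .
  moreover have "n \<le> max_pos" "m \<le> max_pos" "src_ok k"
    using transfer_ok_bounds[OF ok] sum by auto
  ultimately show ?thesis
    using that w m Q by blast
qed

definition inv_evol :: "nat \<Rightarrow> ('a + nat) list \<Rightarrow> bool" where
  "inv_evol p w =
    (if p = 0 then in_orbit w \<or> first_emitted w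
     else if p = 1 then lead_marked w \<or> first_emitted_marked w \<or> later_emitted w
     else if p = 2 then appended (msym Fresh) lead_marked w \<or> appended (msym Fresh) first_emitted_marked w
       \<or> appended (msym Fresh) later_emitted w \<or> appended (msym (Acc False 0)) first_emitted_marked w
       \<or> counting False False (\<lambda>k n m. m = 0) w
     else if p = 3 then counting False False (\<lambda>_ _ _. True) w \<or> counting True False (\<lambda>_ _ _. True) w
       \<or> letter_written w
     else if p = 4 then counting True False (\<lambda>_ _ _. True) w \<or> counting True True (\<lambda>_ _ _. True) w
     else if p = 5 then counting True True (\<lambda>_ _ _. True) w \<or> counting False True (\<lambda>_ _ _. True) w
     else if p = 6 then counting False True (\<lambda>_ _ _. True) w \<or> counting False False (\<lambda>k n m. 1 \<le> m) w
     else if p = 7 then appended (msym (Acc False 0)) first_emitted_marked w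
       \<or> counting False False (\<lambda>k n m. k \<noteq> Lead) w \<or> counting False False (\<lambda>k n m. k = Lead \<and> n = 0) w
       \<or> head_read w
     else if p = 8 then letter_written w \<or> head_read w \<or> in_orbit w \<or> first_emitted w
     else False)"

definition inv_comm :: "nat \<Rightarrow> ('a + nat) list \<Rightarrow> bool" where
  "inv_comm p w =
    (if p = 0 then in_orbit w \<or> first_emitted w \<or> lead_marked w \<or> first_emitted_marked w
     else if p = 1 then appended (msym Fresh) lead_marked w \<or> appended (msym Fresh) first_emitted_marked w
       \<or> appended (msym Fresh) later_emitted w
     else if p = 2 then appended (msym (Acc False 0)) first_emitted_marked w
       \<or> counting False False (\<lambda>k n m. m = 0) w
     else if p = 8 then inv_evol 8 w \<or> later_emitted w
     else inv_evol p w)"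

lemma inv_evol_simps:
  "inv_evol 0 w = (in_orbit w \<or> first_emitted w)"
  "inv_evol 1 w = (lead_marked w \<or> first_emitted_marked w \<or> later_emitted w)"
  "inv_evol 2 w = (appended (msym Fresh) lead_marked w \<or> appended (msym Fresh) first_emitted_marked w
       \<or> appended (msym Fresh) later_emitted w \<or> appended (msym (Acc False 0)) first_emitted_marked w
       \<or> counting False False (\<lambda>k n m. m = 0) w)"
  "inv_evol 3 w = (counting False False (\<lambda>_ _ _. True) w \<or> counting True False (\<lambda>_ _ _. True) w
       \<or> letter_written w)"
  "inv_evol 4 w = (counting True False (\<lambda>_ _ _. True) w \<or> counting True True (\<lambda>_ _ _. True) w)"
  "inv_evol 5 w = (counting True True (\<lambda>_ _ _. True) w \<or> counting False True (\<lambda>_ _ _. True) w)"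
  "inv_evol 6 w = (counting False True (\<lambda>_ _ _. True) w \<or> counting False False (\<lambda>k n m. 1 \<le> m) w)"
  "inv_evol 7 w = (appended (msym (Acc False 0)) first_emitted_marked w
       \<or> counting False False (\<lambda>k n m. k \<noteq> Lead) w \<or> counting False False (\<lambda>k n m. k = Lead \<and> n = 0) w
       \<or> head_read w)"
  "inv_evol 8 w = (letter_written w \<or> head_read w \<or> in_orbit w \<or> first_emitted w)"
  "inv_evol 9 w = False"
  "inv_evol (Suc 0) w = (lead_marked w \<or> first_emitted_marked w \<or> later_emitted w)"
  by (simp_all add: inv_evol_def)

lemma inv_comm_simps:
  "inv_comm 0 w = (in_orbit w \<or> first_emitted w \<or> lead_marked w \<or> first_emitted_marked w)"
  "inv_comm 1 w = (appended (msym Fresh) lead_marked w \<or> appended (msym Fresh) first_emitted_marked w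
       \<or> appended (msym Fresh) later_emitted w)"
  "inv_comm 2 w = (appended (msym (Acc False 0)) first_emitted_marked w
       \<or> counting False False (\<lambda>k n m. m = 0) w)"
  "inv_comm 8 w = (inv_evol 8 w \<or> later_emitted w)"
  "p \<in> {3, 4, 5, 6, 7} \<Longrightarrow> inv_comm p w = inv_evol p w"
  "inv_comm 9 w = False"
  "inv_comm (Suc 0) w = (appended (msym Fresh) lead_marked w \<or> appended (msym Fresh) first_emitted_marked w
       \<or> appended (msym Fresh) later_emitted w)"
  by (auto simp: inv_comm_def inv_evol_def)

lemma evol_0:
  assumes "inv_evol 0 w" "\<sigma> \<in> net_rules 0" "w' \<in> rule_app \<sigma> (net_mode 0) w"
  shows "inv_comm 0 w'"
proof -
  obtain c where \<sigma>: "\<sigma> = Subst (Inl c) (msym (Src Lead False (pos c 0)))"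
    using assms(2) by (auto simp: net_rules_def)
  from rule_app_Subst_cases[OF assms(3)[unfolded \<sigma>]] consider
      "w' = w"
    | u v where "w = u @ Inl c # v" "w' = u @ msym (Src Lead False (pos c 0)) # v"
    by blast
  then show ?thesis
  proof cases
    case 1
    then show ?thesis using assms(1) by (auto simp: inv_evol_simps inv_comm_simps)
  next
    case (2 u v)
    from assms(1) consider "in_orbit w" | "first_emitted w"
      by (auto simp: inv_evol_simps)
    then show ?thesis
    proof cases
      case 1
      then obtain u0 where u0: "u0 \<in> R" "w = lift u0" by (auto simp: in_orbit_def)
      with map_Inl_split[of u c v u0 "[]"] 2 obtain t1 t2 where
        "u0 = t1 @ c # t2" "u = lift t1" "v = lift t2" by auto
      then have "lead_marked w'" unfolding lead_marked_def using u0(1) 2 by blast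
      then show ?thesis by (simp add: inv_comm_simps)
    next
      case 3: 2
      then obtain x y r where xyr: "x # y # r \<in> R" "w = lift (y # r) @ [first_pending x]"
        by (auto simp: first_emitted_def)
      with map_Inl_split[of u c v "y # r" "[first_pending x]"] 2 obtain t1 t2 where
        "y # r = t1 @ c # t2" "u = lift t1" "v = lift t2 @ [first_pending x]"
        by (auto simp: first_pending_def)
      then have "first_emitted_marked w'" unfolding first_emitted_marked_def using xyr(1) 2 by blast
      then show ?thesis by (simp add: inv_comm_simps)
    qed
  qed
qed

lemma evol_1:
  assumes "inv_evol 1 w" "\<sigma> \<in> net_rules 1" "w' \<in> rule_app \<sigma> (net_mode 1) w"
  shows "inv_comm 1 w'"
proof -
  have "w' = w @ [msym Fresh]"
    using assms(2,3) by (simp add: net_rules_def net_mode_def)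
  with assms(1) show ?thesis
    unfolding inv_evol_simps inv_comm_simps appended_def by blast
qed

lemma fresh_notin_shapes:
  "lead_marked w \<Longrightarrow> msym Fresh \<notin> set w" "first_emitted_marked w \<Longrightarrow> msym Fresh \<notin> set w"
  "later_emitted w \<Longrightarrow> msym Fresh \<notin> set w" "counting ps pt Q w \<Longrightarrow> msym Fresh \<notin> set w"
  by (auto simp: lead_marked_def first_emitted_marked_def later_emitted_def first_pending_def
      counting_def set_ctr_word)

lemma evol_2:
  assumes "inv_evol 2 w" "\<sigma> \<in> net_rules 2" "w' \<in> rule_app \<sigma> (net_mode 2) w"
  shows "inv_comm 2 w'"
proof -
  have r: "w' \<in> rule_app (Subst (msym Fresh) (msym (Acc False 0))) AStar w"
    using assms(2,3) by (simp add: net_rules_def net_mode_def)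
  have fresh_to_acc: "w' = w0 @ [msym (Acc False 0)]" if "w = w0 @ [msym Fresh]" "msym Fresh \<notin> set w0" for w0
    using rule_app_Subst_last[OF r[unfolded that(1)] that(2,2)] by simp
  from assms(1) consider
      (lead) "appended (msym Fresh) lead_marked w"
    | (first) "appended (msym Fresh) first_emitted_marked w"
    | (later) "appended (msym Fresh) later_emitted w"
    | (acc) "appended (msym (Acc False 0)) first_emitted_marked w \<or> counting False False (\<lambda>k n m. m = 0) w"
    by (auto simp: inv_evol_simps)
  then show ?thesis
  proof cases
    case lead
    then obtain u1 a u2 where a: "u1 @ a # u2 \<in> R"
      "w = (lift u1 @ msym (Src Lead False (pos a 0)) # lift u2) @ [msym Fresh]"
      by (auto simp: appended_def lead_marked_def)
    have w': "w' = ctr_word Lead u1 u2 (pos a 0) 0 False False"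
      using fresh_to_acc[OF a(2)] by (simp add: ctr_word_def)
    have "transfer_ok Lead u1 u2 (pos a 0)"
      using a(1) by (auto simp: transfer_ok_def)
    then have "counting False False (\<lambda>k n m. m = 0) w'"
      by (rule countingI[of _ _ _ _ "pos a 0" 0]) (use w' in auto)
    then show ?thesis
      by (simp add: inv_comm_simps)
  next
    case first
    then obtain w0 where w0: "first_emitted_marked w0" "w = w0 @ [msym Fresh]"
      by (auto simp: appended_def)
    then have "w' = w0 @ [msym (Acc False 0)]"
      using fresh_to_acc fresh_notin_shapes(2) by blast
    then show ?thesis
      using w0(1) by (auto simp: inv_comm_simps appended_def)
  next
    case later
    then obtain x y r i where a: "x # y # r \<in> R" "Suc i < length (phi x)"
      "w = (lift (r @ take i (phi x)) @ [msym (Src (Letter (code (phi x ! i))) False (pos x (Suc i)))])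
        @ [msym Fresh]"
      by (auto simp: appended_def later_emitted_def)
    have w': "w' = ctr_word (Letter (code (phi x ! i))) (r @ take i (phi x)) [] (pos x (Suc i)) 0 False False"
      using fresh_to_acc[OF a(3)] by (simp add: ctr_word_def)
    have "transfer_ok (Letter (code (phi x ! i))) (r @ take i (phi x)) [] (pos x (Suc i))"
      using a(1,2) unfolding transfer_ok_def by blast
    then have "counting False False (\<lambda>k n m. m = 0) w'"
      by (rule countingI[of _ _ _ _ "pos x (Suc i)" 0]) (use w' in auto)
    then show ?thesis
      by (simp add: inv_comm_simps)
  next
    case acc
    then have "msym Fresh \<notin> set w"
      using fresh_notin_shapes(2,4) by (auto simp: appended_def)
    then show ?thesis
      using rule_app_Subst_absent[OF r] acc by (auto simp: inv_comm_simps)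
  qed
qed

lemma evol_3:
  assumes "inv_evol 3 w" "\<sigma> \<in> net_rules 3" "w' \<in> rule_app \<sigma> (net_mode 3) w"
  shows "inv_comm 3 w'"
proof -
  obtain a b where \<sigma>: "\<sigma> = Subst a b" and ab:
    "(\<exists>k n. src_ok k \<and> 0 < n \<and> a = msym (Src k False n) \<and> b = msym (Src k True (n - 1)))
      \<or> (\<exists>p. p \<in> V \<and> a = msym (Src (Letter (code p)) False 0) \<and> b = Inl p)"
    using assms(2) by (auto simp: net_rules_def)
  obtain k' n' where a: "a = msym (Src k' False n')"
    using ab by blast
  note r = assms(3)[unfolded \<sigma>]
  from assms(1) consider
      (primed) "counting True False (\<lambda>_ _ _. True) w \<or> letter_written w"
    | (unprimed) "counting False False (\<lambda>_ _ _. True) w"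
    by (auto simp: inv_evol_simps)
  then show ?thesis
  proof cases
    case primed
    then have "a \<notin> set w"
      using a by (auto elim!: countingE simp: set_ctr_word letter_written_def)
    then show ?thesis
      using rule_app_Subst_absent[OF r] assms(1) by (simp add: inv_comm_simps)
  next
    case unprimed
    then obtain k \<alpha> \<beta> n m tot where ok: "transfer_ok k \<alpha> \<beta> tot" "n + m = tot"
      and w: "w = lift \<alpha> @ msym (Src k False n) # (lift \<beta> @ [msym (Acc False m)])"
      by (auto elim!: countingE simp: ctr_word_def)
    from rule_app_Subst_at[OF r[unfolded w]] a consider
        "w' = w"
      | "a = msym (Src k False n)" "w' = lift \<alpha> @ b # (lift \<beta> @ [msym (Acc False m)])"
      using w by auto
    then show ?thesis
    proof cases
      case 1
      then show ?thesis using assms(1) by (simp add: inv_comm_simps)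
    next
      case 2
      from ab show ?thesis
      proof (elim disjE exE conjE)
        fix k'' n'' assume dec: "src_ok k''" "0 < n''" "a = msym (Src k'' False n'')"
          "b = msym (Src k'' True (n'' - 1))"
        have "counting True False (\<lambda>_ _ _. True) w'"
          by (rule countingI[OF ok(1), of "n - 1" m]) (use dec 2 ok in \<open>auto simp: ctr_word_def\<close>)
        then show ?thesis by (simp add: inv_comm_simps inv_evol_simps)
      next
        fix p assume p: "p \<in> V" "a = msym (Src (Letter (code p)) False 0)" "b = Inl p"
        then have kn: "k = Letter (code p)" "n = 0" using 2 by auto
        with ok(1) obtain x y r i where xi: "x # y # r \<in> R" "Suc i < length (phi x)"
          "\<alpha> = r @ take i (phi x)" "\<beta> = []" "code (phi x ! i) = code p" "tot = pos x (Suc i)"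
          by (auto simp: transfer_ok_def)
        have "phi x ! i \<in> set (phi x)" using xi(2) by simp
        then have "phi x ! i \<in> V" using orbit_Cons2(6)[OF xi(1)] by blast
        then have "phi x ! i = p" using xi(5) p(1) code_inj by (auto dest: inj_onD)
        moreover have "take (Suc i) (phi x) = take i (phi x) @ [phi x ! i]"
          using xi(2) by (simp add: take_Suc_conv_app_nth)
        ultimately have "letter_written w'"
          unfolding letter_written_def using xi 2 p kn ok(2)
          by (intro exI[of _ x] exI[of _ y] exI[of _ r] exI[of _ i]) auto
        then show ?thesis by (simp add: inv_comm_simps inv_evol_simps)
      qed
    qed
  qed
qed

lemma evol_4:
  assumes "inv_evol 4 w" "\<sigma> \<in> net_rules 4" "w' \<in> rule_app \<sigma> (net_mode 4) w"
  shows "inv_comm 4 w'"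
proof -
  obtain m' where \<sigma>: "\<sigma> = Subst (msym (Acc False m')) (msym (Acc True (Suc m')))"
    using assms(2) by (auto simp: net_rules_def)
  note r = assms(3)[unfolded \<sigma>]
  from assms(1) consider
      (decremented) "counting True False (\<lambda>_ _ _. True) w"
    | (incremented) "counting True True (\<lambda>_ _ _. True) w"
    by (auto simp: inv_evol_simps)
  then show ?thesis
  proof cases
    case decremented
    then obtain k \<alpha> \<beta> n m tot where ok: "transfer_ok k \<alpha> \<beta> tot" "n + m + 1 = tot"
      and w: "w = (lift \<alpha> @ msym (Src k True n) # lift \<beta>) @ [msym (Acc False m)]"
      by (auto elim!: countingE simp: ctr_word_def)
    from rule_app_Subst_at[OF r[unfolded w]] consider
        "w' = w"
      | "m' = m" "w' = (lift \<alpha> @ msym (Src k True n) # lift \<beta>) @ [msym (Acc True (Suc m))]"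
      using w by auto
    then show ?thesis
    proof cases
      case 2
      have "counting True True (\<lambda>_ _ _. True) w'"
        by (rule countingI[OF ok(1), of n "Suc m"]) (use 2 ok in \<open>auto simp: ctr_word_def\<close>)
      then show ?thesis by (simp add: inv_comm_simps inv_evol_simps)
    qed (use assms(1) in \<open>simp add: inv_comm_simps\<close>)
  next
    case incremented
    then have "msym (Acc False m') \<notin> set w"
      by (auto elim!: countingE simp: set_ctr_word)
    then show ?thesis
      using rule_app_Subst_absent[OF r] assms(1) by (simp add: inv_comm_simps)
  qed
qed

lemma evol_5:
  assumes "inv_evol 5 w" "\<sigma> \<in> net_rules 5" "w' \<in> rule_app \<sigma> (net_mode 5) w"
  shows "inv_comm 5 w'"
proof -
  obtain k' n' where \<sigma>: "\<sigma> = Subst (msym (Src k' True n')) (msym (Src k' False n'))"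
    using assms(2) by (auto simp: net_rules_def)
  note r = assms(3)[unfolded \<sigma>]
  from assms(1) consider
      (primed) "counting True True (\<lambda>_ _ _. True) w"
    | (unprimed) "counting False True (\<lambda>_ _ _. True) w"
    by (auto simp: inv_evol_simps)
  then show ?thesis
  proof cases
    case primed
    then obtain k \<alpha> \<beta> n m tot where ok: "transfer_ok k \<alpha> \<beta> tot" "n + m = tot" "1 \<le> m"
      and w: "w = lift \<alpha> @ msym (Src k True n) # (lift \<beta> @ [msym (Acc True m)])"
      by (auto elim!: countingE simp: ctr_word_def)
    from rule_app_Subst_at[OF r[unfolded w]] consider
        "w' = w"
      | "k' = k" "n' = n" "w' = lift \<alpha> @ msym (Src k False n) # (lift \<beta> @ [msym (Acc True m)])"
      using w by auto
    then show ?thesis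
    proof cases
      case 2
      have "counting False True (\<lambda>_ _ _. True) w'"
        by (rule countingI[OF ok(1), of n m]) (use 2 ok in \<open>auto simp: ctr_word_def\<close>)
      then show ?thesis by (simp add: inv_comm_simps inv_evol_simps)
    qed (use assms(1) in \<open>simp add: inv_comm_simps\<close>)
  next
    case unprimed
    then have "msym (Src k' True n') \<notin> set w"
      by (auto elim!: countingE simp: set_ctr_word)
    then show ?thesis
      using rule_app_Subst_absent[OF r] assms(1) by (simp add: inv_comm_simps)
  qed
qed

lemma evol_6:
  assumes "inv_evol 6 w" "\<sigma> \<in> net_rules 6" "w' \<in> rule_app \<sigma> (net_mode 6) w"
  shows "inv_comm 6 w'"
proof -
  obtain m' where \<sigma>: "\<sigma> = Subst (msym (Acc True m')) (msym (Acc False m'))"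
    using assms(2) by (auto simp: net_rules_def)
  note r = assms(3)[unfolded \<sigma>]
  from assms(1) consider
      (primed) "counting False True (\<lambda>_ _ _. True) w"
    | (unprimed) "counting False False (\<lambda>k n m. 1 \<le> m) w"
    by (auto simp: inv_evol_simps)
  then show ?thesis
  proof cases
    case primed
    then obtain k \<alpha> \<beta> n m tot where ok: "transfer_ok k \<alpha> \<beta> tot" "n + m = tot" "1 \<le> m"
      and w: "w = (lift \<alpha> @ msym (Src k False n) # lift \<beta>) @ [msym (Acc True m)]"
      by (auto elim!: countingE simp: ctr_word_def)
    from rule_app_Subst_at[OF r[unfolded w]] consider
        "w' = w"
      | "m' = m" "w' = (lift \<alpha> @ msym (Src k False n) # lift \<beta>) @ [msym (Acc False m)]"
      using w by auto
    then show ?thesis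
    proof cases
      case 2
      have "counting False False (\<lambda>k n m. 1 \<le> m) w'"
        by (rule countingI[OF ok(1), of n m]) (use 2 ok in \<open>auto simp: ctr_word_def\<close>)
      then show ?thesis by (simp add: inv_comm_simps inv_evol_simps)
    qed (use assms(1) in \<open>simp add: inv_comm_simps\<close>)
  next
    case unprimed
    then have "msym (Acc True m') \<notin> set w"
      by (auto elim!: countingE simp: set_ctr_word)
    then show ?thesis
      using rule_app_Subst_absent[OF r] assms(1) by (simp add: inv_comm_simps)
  qed
qed

lemma ctr_word_Cons_lead:
  "ctr_word k \<alpha> \<beta> n m ps pt = msym (Src Lead False n') # w'
    \<Longrightarrow> \<alpha> = [] \<and> k = Lead \<and> \<not> ps \<and> n = n' \<and> w' = lift \<beta> @ [msym (Acc pt m)]"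
  by (cases \<alpha>) (auto simp: ctr_word_def)

lemma evol_7:
  assumes "inv_evol 7 w" "\<sigma> \<in> net_rules 7" "w' \<in> rule_app \<sigma> (net_mode 7) w"
  shows "inv_comm 7 w'"
proof -
  obtain n' where \<sigma>: "\<sigma> = Del (msym (Src Lead False n'))"
    using assms(2) by (auto simp: net_rules_def)
  have "w' = w \<or> w = msym (Src Lead False n') # w'"
    using rule_app_Del_left_cases assms(3) \<sigma> by (simp add: net_mode_def)
  then show ?thesis
  proof
    assume "w' = w"
    then show ?thesis using assms(1) by (simp add: inv_comm_simps)
  next
    assume wh: "w = msym (Src Lead False n') # w'"
    from assms(1) consider
        (fst) "appended (msym (Acc False 0)) first_emitted_marked w"
      | (later) "counting False False (\<lambda>k n m. k \<noteq> Lead) w"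
      | (lead) "counting False False (\<lambda>k n m. k = Lead \<and> n = 0) w"
      | (read) "head_read w"
      by (auto simp: inv_evol_simps)
    then show ?thesis
    proof cases
      case fst
      then obtain x y r v1 b v2 where a: "x # y # r \<in> R" "y # r = v1 @ b # v2"
        "w = lift v1 @ msym (Src Lead False (pos b 0)) # lift v2 @ [first_pending x, msym (Acc False 0)]"
        by (auto simp: appended_def first_emitted_marked_def)
      have "v1 = []" using a(3) wh by (cases v1) auto
      with a wh have w': "w' = lift r @ [first_pending x, msym (Acc False 0)]" by simp
      have "transfer_ok (Letter (code (phi x ! 0))) r [] (pos x 1)"
        unfolding transfer_ok_def using a(1) orbit_Cons2(5)[OF a(1)]
        by (intro disjI2 exI[of _ x] exI[of _ y] exI[of _ r] exI[of _ 0]) simp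
      then have "counting False False (\<lambda>k n m. k \<noteq> Lead) w'"
        by (rule countingI[of _ _ _ _ "pos x 1" 0]) (auto simp: w' ctr_word_def first_pending_def)
      then show ?thesis by (simp add: inv_comm_simps inv_evol_simps)
    next
      case later
      then obtain k \<alpha> \<beta> n m where "k \<noteq> Lead" "w = ctr_word k \<alpha> \<beta> n m False False"
        by (auto elim!: countingE)
      with wh ctr_word_Cons_lead[of k \<alpha> \<beta> n m False False n' w'] show ?thesis
        by simp
    next
      case lead
      then obtain \<alpha> \<beta> m tot where ok: "transfer_ok Lead \<alpha> \<beta> tot" "m = tot"
        and w: "w = ctr_word Lead \<alpha> \<beta> 0 m False False"
        by (auto elim!: countingE)
      from ctr_word_Cons_lead[OF w[symmetric, unfolded wh]] have h: "\<alpha> = []" "w' = lift \<beta> @ [msym (Acc False m)]"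
        by auto
      from ok(1) obtain a where a: "\<alpha> @ a # \<beta> \<in> R" "tot = pos a 0"
        by (auto simp: transfer_ok_def)
      obtain y r where "\<beta> = y # r"
        using orbit_split(4)[OF a(1)] h(1) by (cases \<beta>) auto
      then have "head_read w'"
        unfolding head_read_def using a h ok(2) by auto
      then show ?thesis by (simp add: inv_comm_simps inv_evol_simps)
    next
      case read
      then show ?thesis using wh by (auto simp: head_read_def)
    qed
  qed
qed

lemma evol_8:
  assumes "inv_evol 8 w" "\<sigma> \<in> net_rules 8" "w' \<in> rule_app \<sigma> (net_mode 8) w"
  shows "inv_comm 8 w'"
proof -
  obtain x' i' b where \<sigma>: "\<sigma> = Subst (msym (Acc False (pos x' i'))) b" "x' \<in> V - {H}"
    and b: "(b = msym (Src (Letter (code (phi x' ! i'))) False (pos x' (Suc i'))) \<and> Suc i' < length (phi x'))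
      \<or> (b = Inl (phi x' ! i') \<and> Suc i' = length (phi x'))"
    using assms(2) by (auto simp: net_rules_def)
  note r = assms(3)[unfolded \<sigma>(1)]
  from assms(1) consider
      (letters) "in_orbit w \<or> first_emitted w"
    | (read) "head_read w"
    | (written) "letter_written w"
    by (auto simp: inv_evol_simps)
  then show ?thesis
  proof cases
    case letters
    then have "msym (Acc False (pos x' i')) \<notin> set w"
      by (auto simp: in_orbit_def first_emitted_def first_pending_def)
    then show ?thesis
      using rule_app_Subst_absent[OF r] assms(1) by (simp add: inv_comm_simps)
  next
    case read
    then obtain x y r where a: "x # y # r \<in> R" "w = lift (y # r) @ [msym (Acc False (pos x 0))]"
      by (auto simp: head_read_def)
    have x: "x \<in> V" "2 \<le> length (phi x)" using orbit_Cons2(1,5)[OF a(1)] by auto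
    have "w' = (if pos x' i' = pos x 0 then lift (y # r) @ [b] else w)"
      using rule_app_Subst_last[OF r[unfolded a(2)]] a(2) by auto
    then consider "w' = w" | "x' = x" "i' = 0" "w' = lift (y # r) @ [b]"
      using \<sigma>(2) x by (auto split: if_splits)
    then show ?thesis
    proof cases
      case 2
      then have "b = first_pending x" using b x by (auto simp: first_pending_def)
      then have "first_emitted w'" unfolding first_emitted_def using a(1) 2 by blast
      then show ?thesis by (simp add: inv_comm_simps inv_evol_simps)
    qed (use assms(1) in \<open>simp add: inv_comm_simps\<close>)
  next
    case written
    then obtain x y r i where a: "x # y # r \<in> R" "Suc i < length (phi x)"
      "w = lift (r @ take (Suc i) (phi x)) @ [msym (Acc False (pos x (Suc i)))]"
      by (auto simp: letter_written_def)
    have x: "x \<in> V" using orbit_Cons2(1)[OF a(1)] by simp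
    have "w' = (if pos x' i' = pos x (Suc i) then lift (r @ take (Suc i) (phi x)) @ [b] else w)"
      using rule_app_Subst_last[OF r[unfolded a(3)]] a(3) by auto
    then consider "w' = w" | "x' = x" "i' = Suc i" "w' = lift (r @ take (Suc i) (phi x)) @ [b]"
      using \<sigma>(2) x by (auto split: if_splits)
    then show ?thesis
    proof cases
      case 2
      from b show ?thesis
      proof (elim disjE conjE)
        assume "b = msym (Src (Letter (code (phi x' ! i'))) False (pos x' (Suc i')))" "Suc i' < length (phi x')"
        then have "later_emitted w'"
          unfolding later_emitted_def using a(1) 2
          by (intro exI[of _ x] exI[of _ y] exI[of _ r] exI[of _ "Suc i"]) simp
        then show ?thesis by (simp add: inv_comm_simps)
      next
        assume b: "b = Inl (phi x' ! i')" "Suc i' = length (phi x')"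
        have "take (Suc i) (phi x) @ [phi x ! Suc i] = phi x"
          using take_Suc_conv_app_nth[of "Suc i" "phi x"] b 2 by simp
        then have "lift (phi x) = lift (take (Suc i) (phi x)) @ [Inl (phi x ! Suc i)]"
          by (metis list.map(1,2) map_append)
        then have "w' = lift (r @ phi x)"
          using 2 b by simp
        then have "in_orbit w'"
          unfolding in_orbit_def using orbit_Cons2(7)[OF a(1)] by blast
        then show ?thesis by (simp add: inv_comm_simps inv_evol_simps)
      qed
    qed (use assms(1) in \<open>simp add: inv_comm_simps\<close>)
  qed
qed

lemma net_nodes_cases:
  assumes "q \<in> net_nodes"
  obtains "q = 0" | "q = 1" | "q = 2" | "q = 3" | "q = 4" | "q = 5" | "q = 6" | "q = 7" | "q = 8" | "q = 9"
proof -
  have "q \<le> 9" using assms by (simp add: net_nodes_def)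
  then have "q = 0 \<or> q = 1 \<or> q = 2 \<or> q = 3 \<or> q = 4 \<or> q = 5 \<or> q = 6 \<or> q = 7 \<or> q = 8 \<or> q = 9"
    by presburger
  then show ?thesis using that by blast
qed

lemma passes_from_0:
  assumes "q \<in> net_nodes" "q \<noteq> 0" "passes 0 q w"
  shows "(q = 1 \<and> filt_word FWeak w (lead_syms, fresh_syms)) \<or>
    (q = 8 \<and> filt_word FWeak w (Inl ` V \<union> first_emit_syms,
       lead_syms \<union> acc_syms \<union> fresh_syms \<union> src_primed_syms \<union> acc_primed_syms \<union> later_emit_syms)) \<or>
    (q = 9 \<and> filt_word FStrong w ({}, non_lead_syms))"
  using assms(1) by (cases rule: net_nodes_cases)
    (use assms(2,3) in \<open>simp_all add: net_fmode_def net_filter_def doubleton_eq_iff\<close>)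

lemma passes_from_1:
  assumes "q \<in> net_nodes" "q \<noteq> 1" "passes 1 q w"
  shows "(q = 0 \<and> filt_word FWeak w (lead_syms, fresh_syms)) \<or>
    (q = 2 \<and> filt_word FWeak w (fresh_syms, {})) \<or>
    (q = 8 \<and> filt_word FWeak w (later_emit_syms,
       fresh_syms \<union> acc_syms \<union> lead_syms \<union> first_emit_syms \<union> src_primed_syms \<union> acc_primed_syms))"
  using assms(1) by (cases rule: net_nodes_cases)
    (use assms(2,3) in \<open>simp_all add: net_fmode_def net_filter_def doubleton_eq_iff\<close>)

lemma passes_from_2:
  assumes "q \<in> net_nodes" "q \<noteq> 2" "passes 2 q w"
  shows "(q = 1 \<and> filt_word FWeak w (fresh_syms, {})) \<or>
    (q = 3 \<and> filt_word FWeak w (acc0_syms, fresh_syms \<union> first_emit_syms \<union> src_primed_syms \<union> acc_primed_syms)) \<or>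
    (q = 7 \<and> filt_word FWeak w (first_emit_syms, fresh_syms \<union> src_primed_syms \<union> acc_primed_syms \<union> acc_pos_syms))"
  using assms(1) by (cases rule: net_nodes_cases)
    (use assms(2,3) in \<open>simp_all add: net_fmode_def net_filter_def doubleton_eq_iff\<close>)

lemma passes_from_3:
  assumes "q \<in> net_nodes" "q \<noteq> 3" "passes 3 q w"
  shows "(q = 2 \<and> filt_word FWeak w (acc0_syms, fresh_syms \<union> first_emit_syms \<union> src_primed_syms \<union> acc_primed_syms)) \<or>
    (q = 4 \<and> filt_word FWeak w (src_primed_syms, acc_primed_syms \<union> fresh_syms)) \<or>
    (q = 6 \<and> filt_word FWeak w (src_syms, src_primed_syms \<union> acc_primed_syms \<union> fresh_syms \<union> acc0_syms)) \<or>
    (q = 7 \<and> filt_word FWeak w (lead0_syms \<union> first_emit_syms,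
       src_primed_syms \<union> acc_primed_syms \<union> fresh_syms \<union> lead_pos_syms)) \<or>
    (q = 8 \<and> filt_word FWeak w (acc_emit_syms, src_syms \<union> src_primed_syms \<union> fresh_syms \<union> acc_primed_syms))"
  using assms(1) by (cases rule: net_nodes_cases)
    (use assms(2,3) in \<open>simp_all add: net_fmode_def net_filter_def doubleton_eq_iff\<close>)

lemma passes_from_4:
  assumes "q \<in> net_nodes" "q \<noteq> 4" "passes 4 q w"
  shows "(q = 3 \<and> filt_word FWeak w (src_primed_syms, acc_primed_syms \<union> fresh_syms)) \<or>
    (q = 5 \<and> filt_word FWeak w (acc_primed_syms, fresh_syms \<union> src_syms))"
  using assms(1) by (cases rule: net_nodes_cases)
    (use assms(2,3) in \<open>simp_all add: net_fmode_def net_filter_def doubleton_eq_iff\<close>)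

lemma passes_from_5:
  assumes "q \<in> net_nodes" "q \<noteq> 5" "passes 5 q w"
  shows "(q = 4 \<and> filt_word FWeak w (acc_primed_syms, fresh_syms \<union> src_syms)) \<or>
    (q = 6 \<and> filt_word FWeak w (src_syms, src_primed_syms \<union> fresh_syms \<union> acc_syms))"
  using assms(1) by (cases rule: net_nodes_cases)
    (use assms(2,3) in \<open>simp_all add: net_fmode_def net_filter_def doubleton_eq_iff\<close>)

lemma passes_from_6:
  assumes "q \<in> net_nodes" "q \<noteq> 6" "passes 6 q w"
  shows "(q = 3 \<and> filt_word FWeak w (src_syms, src_primed_syms \<union> acc_primed_syms \<union> fresh_syms \<union> acc0_syms)) \<or>
    (q = 5 \<and> filt_word FWeak w (src_syms, src_primed_syms \<union> fresh_syms \<union> acc_syms))"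
  using assms(1) by (cases rule: net_nodes_cases)
    (use assms(2,3) in \<open>simp_all add: net_fmode_def net_filter_def doubleton_eq_iff\<close>)

lemma passes_from_7:
  assumes "q \<in> net_nodes" "q \<noteq> 7" "passes 7 q w"
  shows "(q = 2 \<and> filt_word FWeak w (first_emit_syms, fresh_syms \<union> src_primed_syms \<union> acc_primed_syms \<union> acc_pos_syms)) \<or>
    (q = 3 \<and> filt_word FWeak w (lead0_syms \<union> first_emit_syms,
       src_primed_syms \<union> acc_primed_syms \<union> fresh_syms \<union> lead_pos_syms)) \<or>
    (q = 8 \<and> filt_word FWeak w (acc_read_syms, src_syms \<union> src_primed_syms \<union> fresh_syms \<union> acc_primed_syms)) \<or>
    (q = 9 \<and> filt_word FWeak w (acc_halt_syms, src_syms \<union> src_primed_syms \<union> fresh_syms \<union> acc_primed_syms))"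
  using assms(1) by (cases rule: net_nodes_cases)
    (use assms(2,3) in \<open>simp_all add: net_fmode_def net_filter_def doubleton_eq_iff\<close>)

lemma passes_from_8:
  assumes "q \<in> net_nodes" "q \<noteq> 8" "passes 8 q w"
  shows "(q = 0 \<and> filt_word FWeak w (Inl ` V \<union> first_emit_syms,
       lead_syms \<union> acc_syms \<union> fresh_syms \<union> src_primed_syms \<union> acc_primed_syms \<union> later_emit_syms)) \<or>
    (q = 1 \<and> filt_word FWeak w (later_emit_syms,
       fresh_syms \<union> acc_syms \<union> lead_syms \<union> first_emit_syms \<union> src_primed_syms \<union> acc_primed_syms)) \<or>
    (q = 3 \<and> filt_word FWeak w (acc_emit_syms, src_syms \<union> src_primed_syms \<union> fresh_syms \<union> acc_primed_syms)) \<or>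
    (q = 7 \<and> filt_word FWeak w (acc_read_syms, src_syms \<union> src_primed_syms \<union> fresh_syms \<union> acc_primed_syms))"
  using assms(1) by (cases rule: net_nodes_cases)
    (use assms(2,3) in \<open>simp_all add: net_fmode_def net_filter_def doubleton_eq_iff\<close>)

lemmas move_simps = inv_evol_simps filt_word_weak_iff filt_word_strong_iff ball_Un bex_Un
  sym_class_defs non_lead_syms_def first_pending_def set_ctr_word Int_Un_distrib Int_Un_distrib2

lemma first_pending_props:
  assumes "x # y # r \<in> R"
  shows "marker_ok (Src (Letter (code (phi x ! 0))) False (pos x 1))"
    "first_emit (Src (Letter (code (phi x ! 0))) False (pos x 1))"
proof -
  have x: "x \<in> V - {H}" "2 \<le> length (phi x)" using orbit_Cons2[OF assms] by auto
  have "0 < length (phi x)" using x(2) by linarith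
  then have "phi x ! 0 \<in> V" using phi_nth_in_V[OF x(1)] by blast
  then show "marker_ok (Src (Letter (code (phi x ! 0))) False (pos x 1))"
    using x by (auto intro!: pos_le_max)
  show "first_emit (Src (Letter (code (phi x ! 0))) False (pos x 1))"
    using x by (auto simp: first_emit_def)
qed

lemma lead_marked_props:
  assumes "lead_marked w"
  obtains u1 a u2 where "u1 @ a # u2 \<in> R" "w = lift u1 @ msym (Src Lead False (pos a 0)) # lift u2"
    "pos a 0 \<le> max_pos" "\<exists>c\<in>set u1 \<union> set u2. c \<in> V"
proof -
  obtain u1 a u2 where a: "u1 @ a # u2 \<in> R" "w = lift u1 @ msym (Src Lead False (pos a 0)) # lift u2"
    using assms by (auto simp: lead_marked_def)
  have "pos a 0 \<le> max_pos" using orbit_split(1)[OF a(1)] by (auto intro: pos_le_max)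
  moreover have "\<exists>c\<in>set u1 \<union> set u2. c \<in> V"
    using orbit_split(2-4)[OF a(1)] by (cases u1; cases u2) auto
  ultimately show ?thesis using that a by blast
qed

lemma first_emitted_marked_props:
  assumes "first_emitted_marked w"
  obtains x y r v1 b v2 where "x # y # r \<in> R"
    "w = lift v1 @ msym (Src Lead False (pos b 0)) # lift v2 @ [first_pending x]" "pos b 0 \<le> max_pos"
proof -
  obtain x y r v1 b v2 where a: "x # y # r \<in> R" "y # r = v1 @ b # v2"
    "w = lift v1 @ msym (Src Lead False (pos b 0)) # lift v2 @ [first_pending x]"
    using assms by (auto simp: first_emitted_marked_def)
  have "b \<in> V - {H}" using orbit_Cons2(2,3)[OF a(1)] a(2) by (cases v1) auto
  then have "pos b 0 \<le> max_pos" by (auto intro: pos_le_max)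
  with that a(1,3) show ?thesis by blast
qed

lemma move_from_0:
  assumes "inv_comm 0 w" "q \<in> net_nodes" "q \<noteq> 0" "passes 0 q w"
  shows "inv_evol q w"
proof -
  note q = passes_from_0[OF assms(2-4)]
  from assms(1) consider (orbit) "in_orbit w" | (first) "first_emitted w" | (lead) "lead_marked w"
    | (first_marked) "first_emitted_marked w"
    by (auto simp: inv_comm_simps)
  then show ?thesis
  proof cases
    case orbit
    then obtain u where "u \<in> R" "w = lift u"
      by (auto simp: in_orbit_def)
    moreover obtain x y r where "u = x # y # r"
      using orbit_Cons2_ex[OF \<open>u \<in> R\<close>] by blast
    ultimately have a: "x # y # r \<in> R" "w = lift (x # y # r)"
      by simp_all
    from q show ?thesis
      by (elim disjE conjE) (use orbit a orbit_Cons2(1)[OF a(1)] in \<open>simp_all add: move_simps\<close>)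
  next
    case first
    then obtain x y r where a: "x # y # r \<in> R" "w = lift (y # r) @ [first_pending x]"
      by (auto simp: first_emitted_def)
    from q show ?thesis
      by (elim disjE conjE)
        (use first a orbit_Cons2(2)[OF a(1)] first_pending_props[OF a(1)] in \<open>simp_all add: move_simps\<close>)
  next
    case lead
    obtain u1 a u2 where a: "u1 @ a # u2 \<in> R" "w = lift u1 @ msym (Src Lead False (pos a 0)) # lift u2"
      "pos a 0 \<le> max_pos" "\<exists>c\<in>set u1 \<union> set u2. c \<in> V"
      by (rule lead_marked_props[OF lead])
    from q show ?thesis
      by (elim disjE conjE) (use lead a in \<open>auto simp: move_simps\<close>)
  next
    case first_marked
    obtain x y r v1 b v2 where a: "x # y # r \<in> R"
      "w = lift v1 @ msym (Src Lead False (pos b 0)) # lift v2 @ [first_pending x]" "pos b 0 \<le> max_pos"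
      by (rule first_emitted_marked_props[OF first_marked])
    from q show ?thesis
      by (elim disjE conjE) (use first_marked a first_pending_props[OF a(1)] in \<open>simp_all add: move_simps\<close>)
  qed
qed

lemma move_from_1:
  assumes "inv_comm 1 w" "q \<in> net_nodes" "q \<noteq> 1" "passes 1 q w"
  shows "inv_evol q w"
proof -
  from assms(1) obtain w0 where w: "w = w0 @ [msym Fresh]"
    by (auto simp: inv_comm_simps appended_def)
  from passes_from_1[OF assms(2-4)] show ?thesis
    by (elim disjE conjE) (use assms(1) w in \<open>auto simp: move_simps inv_comm_simps\<close>)
qed

lemma move_from_2:
  assumes "inv_comm 2 w" "q \<in> net_nodes" "q \<noteq> 2" "passes 2 q w"
  shows "inv_evol q w"
proof -
  note q = passes_from_2[OF assms(2-4)]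
  from assms(1) consider (first_marked) "appended (msym (Acc False 0)) first_emitted_marked w"
    | (ctr) "counting False False (\<lambda>k n m. m = 0) w"
    by (auto simp: inv_comm_simps)
  then show ?thesis
  proof cases
    case first_marked
    then obtain w0 where w0: "first_emitted_marked w0" "w = w0 @ [msym (Acc False 0)]"
      by (auto simp: appended_def)
    obtain x y r v1 b v2 where a: "x # y # r \<in> R"
      "w0 = lift v1 @ msym (Src Lead False (pos b 0)) # lift v2 @ [first_pending x]" "pos b 0 \<le> max_pos"
      by (rule first_emitted_marked_props[OF w0(1)])
    from q show ?thesis
      by (elim disjE conjE) (use first_marked w0 a first_pending_props[OF a(1)] in \<open>simp_all add: move_simps\<close>)
  next
    case ctr
    obtain k \<alpha> \<beta> n m where F: "w = ctr_word k \<alpha> \<beta> n m False False" "n \<le> max_pos" "m \<le> max_pos"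
      "src_ok k" "m = 0" "\<And>Q'. Q' k n m \<Longrightarrow> counting False False Q' (ctr_word k \<alpha> \<beta> n m False False)"
      by (rule countingE_exact[OF ctr]) blast+
    from q show ?thesis
      by (elim disjE conjE; cases k) (use F in \<open>simp_all add: move_simps\<close>)
  qed
qed

lemma move_from_3:
  assumes "inv_comm 3 w" "q \<in> net_nodes" "q \<noteq> 3" "passes 3 q w"
  shows "inv_evol q w"
proof -
  note q = passes_from_3[OF assms(2-4)]
  from assms(1) consider (ctr) ps where "counting ps False (\<lambda>_ _ _. True) w"
    | (written) "letter_written w"
    by (auto simp: inv_comm_simps inv_evol_simps)
  then show ?thesis
  proof cases
    case (ctr ps)
    obtain k \<alpha> \<beta> n m where F: "w = ctr_word k \<alpha> \<beta> n m ps False" "n \<le> max_pos" "m \<le> max_pos"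
      "src_ok k" "\<And>Q'. Q' k n m \<Longrightarrow> counting ps False Q' (ctr_word k \<alpha> \<beta> n m ps False)"
      by (rule countingE_exact[OF ctr]) blast+
    from q show ?thesis
      by (elim disjE conjE; cases k; cases ps) (use F in \<open>simp_all add: move_simps\<close>)
  next
    case written
    then obtain x y r i where a: "x # y # r \<in> R" "Suc i < length (phi x)"
      "w = lift (r @ take (Suc i) (phi x)) @ [msym (Acc False (pos x (Suc i)))]"
      by (auto simp: letter_written_def)
    have x: "x \<in> V - {H}" "pos x (Suc i) \<le> max_pos"
      using orbit_Cons2(1)[OF a(1)] a(2) by (auto intro: pos_le_max)
    from q show ?thesis
      by (elim disjE conjE) (use written a x in \<open>simp_all add: move_simps\<close>)
  qed
qed

lemma move_from_4:
  assumes "inv_comm 4 w" "q \<in> net_nodes" "q \<noteq> 4" "passes 4 q w"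
  shows "inv_evol q w"
proof -
  from assms(1) obtain pt where ctr: "counting True pt (\<lambda>_ _ _. True) w"
    by (auto simp: inv_comm_simps inv_evol_simps)
  obtain k \<alpha> \<beta> n m where F: "w = ctr_word k \<alpha> \<beta> n m True pt" "n \<le> max_pos" "m \<le> max_pos"
    "src_ok k" "\<And>Q'. Q' k n m \<Longrightarrow> counting True pt Q' (ctr_word k \<alpha> \<beta> n m True pt)"
    by (rule countingE_exact[OF ctr]) blast+
  from passes_from_4[OF assms(2-4)] show ?thesis
    by (elim disjE conjE; cases k; cases pt) (use F in \<open>simp_all add: move_simps\<close>)
qed

lemma move_from_5:
  assumes "inv_comm 5 w" "q \<in> net_nodes" "q \<noteq> 5" "passes 5 q w"
  shows "inv_evol q w"
proof -
  from assms(1) obtain ps where ctr: "counting ps True (\<lambda>_ _ _. True) w"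
    by (auto simp: inv_comm_simps inv_evol_simps)
  obtain k \<alpha> \<beta> n m where F: "w = ctr_word k \<alpha> \<beta> n m ps True" "n \<le> max_pos" "m \<le> max_pos"
    "src_ok k" "1 \<le> m" "\<And>Q'. Q' k n m \<Longrightarrow> counting ps True Q' (ctr_word k \<alpha> \<beta> n m ps True)"
    by (rule countingE_exact[OF ctr]) blast+
  from passes_from_5[OF assms(2-4)] show ?thesis
    by (elim disjE conjE; cases k; cases ps) (use F in \<open>simp_all add: move_simps\<close>)
qed

lemma move_from_6:
  assumes "inv_comm 6 w" "q \<in> net_nodes" "q \<noteq> 6" "passes 6 q w"
  shows "inv_evol q w"
proof -
  note q = passes_from_6[OF assms(2-4)]
  from assms(1) consider (primed) "counting False True (\<lambda>_ _ _. True) w"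
    | (unprimed) "counting False False (\<lambda>k n m. 1 \<le> m) w"
    by (auto simp: inv_comm_simps inv_evol_simps)
  then show ?thesis
  proof cases
    case primed
    obtain k \<alpha> \<beta> n m where F: "w = ctr_word k \<alpha> \<beta> n m False True" "n \<le> max_pos" "m \<le> max_pos"
      "src_ok k" "1 \<le> m" "\<And>Q'. Q' k n m \<Longrightarrow> counting False True Q' (ctr_word k \<alpha> \<beta> n m False True)"
      by (rule countingE_exact[OF primed]) blast+
    from q show ?thesis
      by (elim disjE conjE; cases k) (use F in \<open>simp_all add: move_simps\<close>)
  next
    case unprimed
    obtain k \<alpha> \<beta> n m where F: "w = ctr_word k \<alpha> \<beta> n m False False" "n \<le> max_pos" "m \<le> max_pos"
      "src_ok k" "1 \<le> m" "\<And>Q'. Q' k n m \<Longrightarrow> counting False False Q' (ctr_word k \<alpha> \<beta> n m False False)"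
      by (rule countingE_exact[OF unprimed]) blast+
    from q show ?thesis
      by (elim disjE conjE; cases k) (use F in \<open>simp_all add: move_simps\<close>)
  qed
qed

lemma move_from_7:
  assumes "inv_comm 7 w" "q \<in> net_nodes" "q \<noteq> 7" "passes 7 q w"
  shows "inv_evol q w"
proof -
  note q = passes_from_7[OF assms(2-4)]
  from assms(1) consider (first_marked) "appended (msym (Acc False 0)) first_emitted_marked w"
    | (ctr) Q where "counting False False Q w"
    | (read) "head_read w"
    by (auto simp: inv_comm_simps inv_evol_simps)
  then show ?thesis
  proof cases
    case first_marked
    then obtain w0 where w0: "first_emitted_marked w0" "w = w0 @ [msym (Acc False 0)]"
      by (auto simp: appended_def)
    obtain x y r v1 b v2 where a: "x # y # r \<in> R"
      "w0 = lift v1 @ msym (Src Lead False (pos b 0)) # lift v2 @ [first_pending x]" "pos b 0 \<le> max_pos"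
      by (rule first_emitted_marked_props[OF w0(1)])
    from q show ?thesis
      by (elim disjE conjE) (use first_marked w0 a first_pending_props[OF a(1)] in \<open>simp_all add: move_simps\<close>)
  next
    case (ctr Q)
    obtain k \<alpha> \<beta> n m where F: "w = ctr_word k \<alpha> \<beta> n m False False" "n \<le> max_pos" "m \<le> max_pos"
      "src_ok k" "\<And>Q'. Q' k n m \<Longrightarrow> counting False False Q' (ctr_word k \<alpha> \<beta> n m False False)"
      by (rule countingE_exact[OF ctr]) blast+
    from q show ?thesis
      by (elim disjE conjE; cases k) (use F in \<open>simp_all add: move_simps\<close>)
  next
    case read
    then obtain x y r where a: "x # y # r \<in> R" "w = lift (y # r) @ [msym (Acc False (pos x 0))]"
      by (auto simp: head_read_def)
    have x: "pos x 0 \<le> max_pos" "\<not> (\<exists>x'\<in>halting_letters. pos x 0 = pos x' 0)"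
      using orbit_Cons2(1,4)[OF a(1)] by (auto simp: halting_letters_def intro: pos_le_max)
    from q show ?thesis
      by (elim disjE conjE) (use read a x in \<open>simp_all add: move_simps\<close>)
  qed
qed

lemma move_from_8:
  assumes "inv_comm 8 w" "q \<in> net_nodes" "q \<noteq> 8" "passes 8 q w"
  shows "inv_evol q w"
proof -
  note q = passes_from_8[OF assms(2-4)]
  from assms(1) consider (written) "letter_written w" | (read) "head_read w" | (orbit) "in_orbit w"
    | (first) "first_emitted w" | (later) "later_emitted w"
    by (auto simp: inv_comm_simps inv_evol_simps)
  then show ?thesis
  proof cases
    case written
    then obtain x y r i where a: "x # y # r \<in> R" "Suc i < length (phi x)"
      "w = lift (r @ take (Suc i) (phi x)) @ [msym (Acc False (pos x (Suc i)))]"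
      by (auto simp: letter_written_def)
    have x: "x \<in> V - {H}" "pos x (Suc i) \<le> max_pos" "\<not> (\<exists>x'\<in>V - {H}. pos x (Suc i) = pos x' 0)"
      using orbit_Cons2(1)[OF a(1)] a(2) by (auto intro: pos_le_max)
    from q show ?thesis
      by (elim disjE conjE) (use written a x in \<open>simp_all add: move_simps\<close>)
  next
    case read
    then obtain x y r where a: "x # y # r \<in> R" "w = lift (y # r) @ [msym (Acc False (pos x 0))]"
      by (auto simp: head_read_def)
    have x: "pos x 0 \<le> max_pos" "\<not> (\<exists>x'\<in>V - {H}. \<exists>j. 0 < j \<and> j < length (phi x') \<and> pos x 0 = pos x' j)"
      using orbit_Cons2(1)[OF a(1)] by (auto intro: pos_le_max)
    from q show ?thesis
      by (elim disjE conjE) (use read a x in \<open>simp_all add: move_simps\<close>)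
  next
    case orbit
    then obtain u where "u \<in> R" "w = lift u"
      by (auto simp: in_orbit_def)
    moreover obtain x y r where "u = x # y # r"
      using orbit_Cons2_ex[OF \<open>u \<in> R\<close>] by blast
    ultimately have a: "x # y # r \<in> R" "w = lift (x # y # r)"
      by simp_all
    from q show ?thesis
      by (elim disjE conjE) (use orbit a orbit_Cons2(1)[OF a(1)] in \<open>simp_all add: move_simps\<close>)
  next
    case first
    then obtain x y r where a: "x # y # r \<in> R" "w = lift (y # r) @ [first_pending x]"
      by (auto simp: first_emitted_def)
    from q show ?thesis
      by (elim disjE conjE) (use first a first_pending_props[OF a(1)] in \<open>simp_all add: move_simps\<close>)
  next
    case later
    then obtain x y r i where a: "x # y # r \<in> R" "0 < i" "Suc i < length (phi x)"
      "w = lift (r @ take i (phi x)) @ [msym (Src (Letter (code (phi x ! i))) False (pos x (Suc i)))]"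
      by (auto simp: later_emitted_def)
    have x: "x \<in> V - {H}" using orbit_Cons2(1)[OF a(1)] .
    have "phi x ! i \<in> V" using phi_nth_in_V[OF x] a(3) by simp
    then have m: "marker_ok (Src (Letter (code (phi x ! i))) False (pos x (Suc i)))"
      "\<not> first_emit (Src (Letter (code (phi x ! i))) False (pos x (Suc i)))"
      using x a(2,3) by (auto simp: first_emit_def intro: pos_le_max)
    from q show ?thesis
      by (elim disjE conjE) (use later a m in \<open>simp_all add: move_simps\<close>)
  qed
qed

lemma lead_marked_passes: "lead_marked w \<Longrightarrow> passes 0 1 w"
  by (erule lead_marked_props) (simp add: net_fmode_def net_filter_def doubleton_eq_iff move_simps)

lemma first_emitted_marked_passes: "first_emitted_marked w \<Longrightarrow> passes 0 1 w"
  by (erule first_emitted_marked_props) (simp add: net_fmode_def net_filter_def doubleton_eq_iff move_simps)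

lemma fresh_passes: "appended (msym Fresh) P w \<Longrightarrow> passes 1 2 w"
  unfolding appended_def
  by (elim exE conjE) (simp add: net_fmode_def net_filter_def doubleton_eq_iff move_simps)

lemma later_emitted_passes:
  assumes "later_emitted w"
  shows "passes 8 1 w"
proof -
  obtain x y r i where a: "x # y # r \<in> R" "0 < i" "Suc i < length (phi x)"
    "w = lift (r @ take i (phi x)) @ [msym (Src (Letter (code (phi x ! i))) False (pos x (Suc i)))]"
    using assms by (auto simp: later_emitted_def)
  have x: "x \<in> V - {H}" using orbit_Cons2(1)[OF a(1)] .
  have "phi x ! i \<in> V" using phi_nth_in_V[OF x] a(3) by simp
  then show ?thesis
    using a x by (simp add: net_fmode_def net_filter_def doubleton_eq_iff move_simps first_emit_def pos_le_max)
qed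

lemma stay:
  assumes "inv_comm p w" "\<forall>q. {p, q} \<in> net_edges \<longrightarrow> \<not> passes p q w"
  shows "inv_evol p w"
proof -
  have edge: "{a, b} \<in> net_edges" if "a \<le> 9" "b \<le> 9" "a \<noteq> b" for a b
    using that by (auto simp: net_edges_def net_nodes_def)
  consider "p = 0" | "p = 1" | "p = 8" | "p \<notin> {0, 1, 8}" by blast
  then show ?thesis
  proof cases
    case 1
    then have "\<not> passes 0 1 w" using assms(2) edge[of 0 1] by simp
    then show ?thesis
      using assms(1) 1 lead_marked_passes first_emitted_marked_passes
      by (auto simp: inv_comm_simps inv_evol_simps)
  next
    case 2
    then have "\<not> passes 1 2 w" using assms(2) edge[of 1 2] by simp
    then show ?thesis
      using assms(1) 2 fresh_passes by (auto simp: inv_comm_simps)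
  next
    case 3
    then have "\<not> passes 8 1 w" using assms(2) edge[of 8 1] by simp
    then show ?thesis
      using assms(1) 3 later_emitted_passes by (auto simp: inv_comm_simps)
  next
    case 4
    then show ?thesis
      using assms(1) by (cases "p = 2") (auto simp: inv_comm_def inv_evol_def)
  qed
qed

lemma inv_evol_node: "inv_evol p w \<Longrightarrow> p \<in> net_nodes"
  by (auto simp: inv_evol_def net_nodes_def split: if_splits)

lemma evol_inv:
  assumes "inv_evol p w" "\<sigma> \<in> net_rules p" "w' \<in> rule_app \<sigma> (net_mode p) w"
  shows "inv_comm p w'"
proof -
  have "p \<le> 8" using assms(1) by (auto simp: inv_evol_def split: if_splits)
  then consider "p = 0" | "p = 1" | "p = 2" | "p = 3" | "p = 4" | "p = 5" | "p = 6" | "p = 7" | "p = 8"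
    by linarith
  then show ?thesis
    using evol_0[of w \<sigma> w'] evol_1[of w \<sigma> w'] evol_2[of w \<sigma> w'] evol_3[of w \<sigma> w'] evol_4[of w \<sigma> w']
      evol_5[of w \<sigma> w'] evol_6[of w \<sigma> w'] evol_7[of w \<sigma> w'] evol_8[of w \<sigma> w'] assms
    by cases simp_all
qed

lemma move_inv:
  assumes "inv_comm p w" "{p, q} \<in> net_edges" "passes p q w"
  shows "inv_evol q w"
proof -
  have q: "q \<in> net_nodes" "q \<noteq> p"
    using assms(2) by (auto simp: net_edges_def doubleton_eq_iff)
  have "p \<le> 8" using assms(1) by (auto simp: inv_comm_def inv_evol_def split: if_splits)
  then consider "p = 0" | "p = 1" | "p = 2" | "p = 3" | "p = 4" | "p = 5" | "p = 6" | "p = 7" | "p = 8"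
    by linarith
  then show ?thesis
    using move_from_0[of w q] move_from_1[of w q] move_from_2[of w q] move_from_3[of w q]
      move_from_4[of w q] move_from_5[of w q] move_from_6[of w q] move_from_7[of w q] move_from_8[of w q]
      assms q
    by cases simp_all
qed

theorem output_unreachable:
  assumes "z \<in> R"
  shows "run tag_net (lift z) n 9 = {}"
proof -
  have inv: "if even n then inv_evol 9 w else inv_comm 9 w" if "w \<in> run tag_net (lift z) n 9" for w
  proof (rule run_invariant[where IE = inv_evol and IC = inv_comm, OF _ _ _ _ _ that])
    show "inv_evol (xin tag_net) (lift z)"
      using assms by (auto simp: tag_net_def inv_evol_simps in_orbit_def)
    show "p \<in> nodes tag_net" if "inv_evol p w" for p w
      using inv_evol_node[OF that] by (simp add: tag_net_def)
    show "inv_comm p w'" if "inv_evol p w" "\<sigma> \<in> rules tag_net p" "w' \<in> rule_app \<sigma> (nmode tag_net p) w"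
      for p w \<sigma> w'
      using evol_inv[OF that(1)] that(2,3) by (simp add: tag_net_def)
    show "inv_evol p w" if "inv_comm p w"
      "\<forall>q. {p, q} \<in> edges tag_net \<longrightarrow> \<not> filt_word (emode tag_net {p, q}) w (efilter tag_net {p, q})" for p w
      using stay[OF that(1)] that(2) by (simp add: tag_net_def)
    show "inv_evol q w" if "inv_comm p w" "{p, q} \<in> edges tag_net"
      "filt_word (emode tag_net {p, q}) w (efilter tag_net {p, q})" for p q w
      using move_inv[OF that(1)] that(2,3) by (simp add: tag_net_def)
  qed
  have "w \<notin> run tag_net (lift z) n 9" for w
  proof
    assume "w \<in> run tag_net (lift z) n 9"
    from inv[OF this] show False
      by (simp add: inv_evol_simps inv_comm_simps split: if_splits)
  qed
  then show ?thesis by blast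
qed

end

context tag_network
begin

lemma iterates_nonhalting_orbit:
  assumes z: "z \<in> lists (V - {H})" and nh: "\<not> tag_halts H phi z"
  shows "nonhalting_orbit V H phi code (range (\<lambda>k. (tag_step phi ^^ k) z))"
proof
  have never: "\<forall>j\<le>k. \<not> halting_word H ((tag_step phi ^^ j) z)" for k
    using nh by (auto simp: tag_halts_def)
  fix u assume "u \<in> range (\<lambda>k. (tag_step phi ^^ k) z)"
  then obtain k where u: "u = (tag_step phi ^^ k) z" by blast
  show "tag_step phi u \<in> range (\<lambda>k. (tag_step phi ^^ k) z)"
    using u by (auto intro: range_eqI[of _ _ "Suc k"])
  have lists: "u \<in> lists (V - {H})"
    using tag_iter_in_lists[OF z never] u by simp
  have "\<not> halting_word H u"
    using never[of k, rule_format, OF order.refl] u by simp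
  then obtain x y r where xyr: "u = x # y # r"
    using nonhalting_word_Cons2 by blast
  have "(tag_step phi ^^ Suc k) z = r @ phi x"
    by (simp add: u[symmetric] xyr tag_step_Cons2)
  then have "\<not> halting_word H (r @ phi x)"
    using never[of "Suc k", rule_format, OF order.refl] by simp
  then have "x \<notin> halting_letters"
    using halting_after_step_iff[of x y r] lists xyr by simp
  then show "u \<in> lists (V - {H}) \<and> 2 \<le> length u \<and> hd u \<notin> halting_letters"
    using lists xyr by simp
qed

lemma accepting_iff_tag_halts:
  assumes z: "z \<in> lists (V - {H})"
  shows "accepting tag_net (lift z) \<longleftrightarrow> tag_halts H phi z"
proof
  assume "tag_halts H phi z"
  then show "accepting tag_net (lift z)"
    using halting_input_accepted[OF z] by (simp add: accepting_iff_output_reached tag_net_def)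
next
  assume acc: "accepting tag_net (lift z)"
  show "tag_halts H phi z"
  proof (rule ccontr)
    assume "\<not> tag_halts H phi z"
    then interpret nonhalting_orbit V H phi code "range (\<lambda>k. (tag_step phi ^^ k) z)"
      by (rule iterates_nonhalting_orbit[OF z])
    have "z \<in> range (\<lambda>k. (tag_step phi ^^ k) z)"
      by (rule range_eqI[of _ _ 0]) simp
    then show False
      using acc output_unreachable by (simp add: accepting_iff_output_reached tag_net_def)
  qed
qed

end

theorem theorem2:
  fixes V :: "'a set" and H :: 'a and phi :: "'a \<Rightarrow> 'a list"
  assumes "tag_system V H phi"
  shows "\<exists>\<Gamma> :: ('a + nat) anepfc.
           wf_anepfc \<Gamma> \<and> complete_graph_size \<Gamma> 10 \<and>
           in_alph \<Gamma> = Inl ` (V - {H}) \<and>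
           accepted_lang \<Gamma> = map Inl ` {w \<in> lists (V - {H}). tag_halts H phi w}"
proof -
  have "finite V" using assms by (simp add: tag_system_def)
  then obtain code :: "'a \<Rightarrow> nat" where "inj_on code V"
    using finite_imp_inj_to_nat_seg by blast
  then interpret tag_network V H phi code
    using assms by unfold_locales
  have "accepted_lang tag_net = {z \<in> map Inl ` lists (V - {H}). accepting tag_net z}"
    by (simp add: accepted_lang_def tag_net_def lists_image)
  also have "\<dots> = map Inl ` {w \<in> lists (V - {H}). tag_halts H phi w}"
    using accepting_iff_tag_halts by auto
  finally show ?thesis
    using wf_tag_net tag_net_complete by (intro exI[of _ tag_net]) (simp add: tag_net_def)
qed

end
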